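(* Let $\mathbb{F}$ be algebraically closed with $\operatorname{char}\mathbb{F}\ne2$, $G$ an abelian group, $h\in G$ of order 2, $\bar G=G/\langle h\rangle$, $\pi:G\to\bar G$ the quotient map, and $\chi:G\to\mathbb{F}^\times$ a character with $\chi(h)=-1$ (so $\chi^2$ is a character of $\bar G$). The $\bar G$-graded algebra $\mathcal{R}=\mathfrak{F}(\bar G,\mathcal{D},\widetilde V,\widetilde B,\bar g_0)$ with its antiautomorphism $\varphi$ satisfies $\varphi^2(r)=\chi^2(\bar g)r$ for all $r\in\mathcal{R}_{\bar g}$, $\bar g\in\bar G$, if and only if $\pi$ splits over the support $\bar T$ of $\mathcal{D}$ (so that $\chi^2$ is trivial on $\bar T$ and may be regarded as a character of $\bar G/\bar T$) and there exists $\mu_0\in\mathbb{F}^\times$ such that, for all $A\in\bar G/\bar T$, $\mu_A=\mu_0\chi^{-2}(A)\beta(\tau(A))$ if $\bar g_0A^2=\bar T$ and $\mu_A=\mu_0\chi^{-2}(A)$ if $\bar g_0A^2\ne\bar T$.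
   Context: $\mathcal{D}=M_\ell(\mathbb{F})$ with a division $\bar G$-grading (nonzero homogeneous elements invertible) whose support $\bar T$ is an elementary abelian 2-group, with homogeneous basis $X_t$ ($t\in\bar T$) such that matrix transpose $\varphi_0$ satisfies $\varphi_0(X_t)=\beta(t)X_t$, $\beta(t)\in\{\pm1\}$. "$\pi$ splits over $\bar T$" means $\pi^{-1}(\bar T)\cong\bar T\times\langle h\rangle$. $\bar g_0\in\bar G$; $\widetilde V$ is a vector space graded by $\bar G/\bar T$; $\widetilde B$ is a nondegenerate bilinear form on $\widetilde V$ with $\widetilde B(\widetilde V_A,\widetilde V_{A'})=0$ unless $\bar g_0AA'=\bar T$ and $\widetilde B(v,u)=\mu_A\widetilde B(u,v)$ for $u\in\widetilde V_A$, $v\in\widetilde V_{\bar g_0^{-1}A^{-1}}$, for some scalars $\mu_A\in\mathbb{F}^\times$. Choose $\gamma(A)\in A$ with $\bar g_0\gamma(A)\gamma(\bar g_0^{-1}A^{-1})=e$ whenever $\bar g_0A^2\ne\bar T$; $\tau(A)=\bar g_0\gamma(A)^2$ when $\bar g_0A^2=\bar T$. $V=\bigoplus_A\widetilde V_A\otimes\mathcal{D}$ with $\tilde v\otimes d$ of degree $\gamma(A)\deg d$; $B:V\times V\to\mathcal{D}$ is $B(u,v)=\widetilde B(u,v)X_{\tau(A)}$ for $u,v\in\widetilde V_A$, $\bar g_0A^2=\bar T$; $B(u,v)=\widetilde B(u,v)1$ for $u\in\widetilde V_A$, $v\in\widetilde V_{\bar g_0^{-1}A^{-1}}$, $\bar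 g_0A^2\ne\bar T$; zero on other pairs of components; extended by $B(ud,vd')=\varphi_0(d)B(u,v)d'$. $\mathcal{R}$ is the graded algebra spanned by operators $v\otimes u:x\mapsto vB(u,x)$ ($u,v$ homogeneous) and $\varphi$ is given by $B(ru,v)=B(u,\varphi(r)v)$. *)

theory Defs
  imports "HOL-Analysis.Analysis" "HOL-Algebra.Coset" "HOL-Computational_Algebra.Polynomial"
begin

definition alg_closed :: "'f::field itself \<Rightarrow> bool" where
  "alg_closed _ = (\<forall>p::'f poly. degree p \<ge> 1 \<longrightarrow> (\<exists>x. poly p x = 0))"

definition smat :: "'f::field \<Rightarrow> 'f^'n^'n \<Rightarrow> 'f^'n^'n" where
  "smat c M = (\<chi> i j. c * M $ i $ j)"

(* V = (direct sum over the homogeneous basis e_i of V~) of e_i \<otimes> D :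
   finitely supported functions 'i \<Rightarrow> M_l(F),  x = sum_i e_i \<otimes> x i *)
definition Vsp :: "('i \<Rightarrow> 'f::field^'n^'n) set" where
  "Vsp = {x. finite {i. x i \<noteq> 0}}"

(* homogeneous elements of V of degree a \<in> G-bar; e_i \<otimes> X_t has degree gam(dg i) t *)
definition Vhom :: "('g set) monoid \<Rightarrow> 'g set set \<Rightarrow> ('g set \<Rightarrow> 'f::field^'n^'n)
    \<Rightarrow> ('g set set \<Rightarrow> 'g set) \<Rightarrow> ('i \<Rightarrow> 'g set set) \<Rightarrow> 'g set \<Rightarrow> ('i \<Rightarrow> 'f^'n^'n) set" where
  "Vhom Gb Tb X gam dg a = {x \<in> Vsp. \<forall>i. x i = 0 \<or>
      (\<exists>t\<in>Tb. \<exists>c. gam (dg i) \<otimes>\<^bsub>Gb\<^esub> t = a \<and> x i = smat c (X t))}"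

(* B(e_i, e_j) \<in> D, following the definition of B *)
definition bhat :: "('g set) monoid \<Rightarrow> 'g set set \<Rightarrow> ('g set \<Rightarrow> 'f::field^'n^'n)
    \<Rightarrow> ('g set set \<Rightarrow> 'g set) \<Rightarrow> ('i \<Rightarrow> 'g set set) \<Rightarrow> 'g set \<Rightarrow> ('i \<Rightarrow> 'i \<Rightarrow> 'f)
    \<Rightarrow> 'i \<Rightarrow> 'i \<Rightarrow> 'f^'n^'n" where
  "bhat Gb Tb X gam dg g0 b i j =
    (let Q = Gb Mod Tb; g0c = Tb #>\<^bsub>Gb\<^esub> g0; A = dg i in
     if g0c \<otimes>\<^bsub>Q\<^esub> A \<otimes>\<^bsub>Q\<^esub> A = \<one>\<^bsub>Q\<^esub>
     then (if dg j = A then smat (b i j) (X (g0 \<otimes>\<^bsub>Gb\<^esub> gam A \<otimes>\<^bsub>Gb\<^esub> gam A)) else 0)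
     else (if dg j = inv\<^bsub>Q\<^esub> (g0c \<otimes>\<^bsub>Q\<^esub> A) then smat (b i j) (mat 1) else 0))"

(* B(x,y) = sum_{i,j} phi0(x i) B(e_i,e_j) (y j), phi0 = transpose *)
definition formB :: "('i \<Rightarrow> 'i \<Rightarrow> 'f::field^'n^'n) \<Rightarrow> ('i \<Rightarrow> 'f^'n^'n) \<Rightarrow> ('i \<Rightarrow> 'f^'n^'n) \<Rightarrow> 'f^'n^'n" where
  "formB bh x y = (\<Sum>i\<in>{i. x i \<noteq> 0}. \<Sum>j\<in>{j. y j \<noteq> 0}. transpose (x i) ** bh i j ** y j)"

(* the operator v \<otimes> u : x \<mapsto> v B(u,x) *)
definition rop :: "('i \<Rightarrow> 'i \<Rightarrow> 'f::field^'n^'n) \<Rightarrow> ('i \<Rightarrow> 'f^'n^'n) \<Rightarrow> ('i \<Rightarrow> 'f^'n^'n)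
    \<Rightarrow> ('i \<Rightarrow> 'f^'n^'n) \<Rightarrow> ('i \<Rightarrow> 'f^'n^'n)" where
  "rop bh v u = (\<lambda>x k. v k ** formB bh u x)"

definition opscale :: "'f::field \<Rightarrow> (('i \<Rightarrow> 'f^'n^'n) \<Rightarrow> ('i \<Rightarrow> 'f^'n^'n))
    \<Rightarrow> (('i \<Rightarrow> 'f^'n^'n) \<Rightarrow> ('i \<Rightarrow> 'f^'n^'n))" where
  "opscale c r = (\<lambda>x k. smat c (r x k))"

(* homogeneous component R_a of R: span of v \<otimes> u with u \<in> V_au, v \<in> V_av, g0 au av = a *)
definition Rdeg :: "('g set) monoid \<Rightarrow> 'g set set \<Rightarrow> ('g set \<Rightarrow> 'f::field^'n^'n)
    \<Rightarrow> ('g set set \<Rightarrow> 'g set) \<Rightarrow> ('i \<Rightarrow> 'g set set) \<Rightarrow> 'g set \<Rightarrow> ('i \<Rightarrow> 'i \<Rightarrow> 'f)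
    \<Rightarrow> 'g set \<Rightarrow> (('i \<Rightarrow> 'f^'n^'n) \<Rightarrow> ('i \<Rightarrow> 'f^'n^'n)) set" where
  "Rdeg Gb Tb X gam dg g0 b a = {r. \<exists>(n::nat) c u v au av.
     (\<forall>k<n. au k \<in> carrier Gb \<and> av k \<in> carrier Gb \<and>
            u k \<in> Vhom Gb Tb X gam dg (au k) \<and> v k \<in> Vhom Gb Tb X gam dg (av k) \<and>
            g0 \<otimes>\<^bsub>Gb\<^esub> au k \<otimes>\<^bsub>Gb\<^esub> av k = a) \<and>
     r = (\<lambda>x p. \<Sum>k<n. smat (c k) (rop (bhat Gb Tb X gam dg g0 b) (v k) (u k) x p))}"

definition Ralg :: "('g set) monoid \<Rightarrow> 'g set set \<Rightarrow> ('g set \<Rightarrow> 'f::field^'n^'n)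
    \<Rightarrow> ('g set set \<Rightarrow> 'g set) \<Rightarrow> ('i \<Rightarrow> 'g set set) \<Rightarrow> 'g set \<Rightarrow> ('i \<Rightarrow> 'i \<Rightarrow> 'f)
    \<Rightarrow> (('i \<Rightarrow> 'f^'n^'n) \<Rightarrow> ('i \<Rightarrow> 'f^'n^'n)) set" where
  "Ralg Gb Tb X gam dg g0 b = {r. \<exists>(n::nat) c u v au av.
     (\<forall>k<n. au k \<in> carrier Gb \<and> av k \<in> carrier Gb \<and>
            u k \<in> Vhom Gb Tb X gam dg (au k) \<and> v k \<in> Vhom Gb Tb X gam dg (av k)) \<and>
     r = (\<lambda>x p. \<Sum>k<n. smat (c k) (rop (bhat Gb Tb X gam dg g0 b) (v k) (u k) x p))}"

definition phiR :: "('g set) monoid \<Rightarrow> 'g set set \<Rightarrow> ('g set \<Rightarrow> 'f::field^'n^'n)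
    \<Rightarrow> ('g set set \<Rightarrow> 'g set) \<Rightarrow> ('i \<Rightarrow> 'g set set) \<Rightarrow> 'g set \<Rightarrow> ('i \<Rightarrow> 'i \<Rightarrow> 'f)
    \<Rightarrow> (('i \<Rightarrow> 'f^'n^'n) \<Rightarrow> ('i \<Rightarrow> 'f^'n^'n)) \<Rightarrow> (('i \<Rightarrow> 'f^'n^'n) \<Rightarrow> ('i \<Rightarrow> 'f^'n^'n))" where
  "phiR Gb Tb X gam dg g0 b r = (THE s. s \<in> Ralg Gb Tb X gam dg g0 b \<and>
     (\<forall>x\<in>Vsp. \<forall>y\<in>Vsp. formB (bhat Gb Tb X gam dg g0 b) (r x) y
                        = formB (bhat Gb Tb X gam dg g0 b) x (s y)))"

end

theory Submission
  imports Defs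
begin

(* Let delta(A) = 1/(mu_A beta(tau(A))) if g0 A^2 = T and delta(A) = 1/mu_A otherwise, and let
   Delta act on V by multiplying the e_i-component by delta(deg e_i).  The symmetry relation between
   B~ and mu, together with transpose(X_t) = beta(t) X_t, says that B is Delta-hermitian:
   transpose (B(u,x)) = B(x, Delta u).  Hence phi(v (x) u) = (Delta u) (x) v, and for homogeneous
   u in V_a, v in V_a' one gets phi^2(v (x) u) = delta(A) delta(A') (v (x) u), where a in A, a' in A'.
   Nondegeneracy of B and invertibility of the X_t make these rank-one operators nonzero, so the
   condition on phi^2 is equivalent to  delta(A) delta(A') = chi^2(g)  for all g in g0 a a'.
   Replacing a by a t with t in T shows that chi^2 is trivial on pi^-1(T); since T is elementary
   abelian and chi(h) = -1, this is exactly the splitting of pi over T (the complement being the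
   elements of pi^-1(T) where chi = 1).  Given that, the condition says delta(A) = chi^2(a)/mu0 for
   one constant mu0, which is the stated formula for mu_A. *)

lemma smat_index [simp]: "smat c M $ i $ j = c * M $ i $ j"
  by (simp add: smat_def)

lemma smat_0_left [simp]: "smat 0 M = 0"
  by (simp add: vec_eq_iff)

lemma smat_0_right [simp]: "smat c 0 = 0"
  by (simp add: vec_eq_iff)

lemma smat_1 [simp]: "smat 1 M = M"
  by (simp add: vec_eq_iff)

lemma smat_smat: "smat c (smat d M) = smat (c * d) M"
  by (simp add: vec_eq_iff mult.assoc)

lemma smat_mult_left: "smat c A ** B = smat c (A ** B)"
  by (simp add: vec_eq_iff matrix_matrix_mult_def sum_distrib_left mult.assoc)

lemma smat_mult_right: "(A :: 'f::field^'n^'n) ** smat c B = smat c (A ** B)"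
  by (simp add: vec_eq_iff matrix_matrix_mult_def sum_distrib_left mult_ac)

lemma transpose_smat: "transpose (smat c A) = smat c (transpose A)"
  by (simp add: vec_eq_iff transpose_def)

lemma transpose_0 [simp]: "transpose 0 = 0"
  by (simp add: vec_eq_iff transpose_def)

lemma smat_sum: "smat c (\<Sum>k\<in>S. f k) = (\<Sum>k\<in>S. smat c (f k))"
  by (cases "finite S") (simp_all add: vec_eq_iff sum_distrib_left)

lemma smat_diff: "smat c (A - B) = smat c A - smat c B"
  by (simp add: vec_eq_iff right_diff_distrib)

lemma transpose_sum: "transpose (\<Sum>k\<in>S. f k) = (\<Sum>k\<in>S. transpose (f k))"
  by (cases "finite S") (simp_all add: vec_eq_iff transpose_def)

lemma matrix_add_rdistrib: "((A :: 'a::semiring_1^'n^'m) + B) ** C = A ** C + B ** C"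
  by (simp add: vec_eq_iff matrix_matrix_mult_def distrib_right sum.distrib)

lemma matrix_sum_mult: "(\<Sum>k\<in>S. f k) ** (B :: 'a::semiring_1^'p^'n) = (\<Sum>k\<in>S. f k ** B)"
  by (induction S rule: infinite_finite_induct) (simp_all add: matrix_add_rdistrib)

lemma matrix_mult_sum: "(A :: 'a::semiring_1^'n^'m) ** (\<Sum>k\<in>S. f k) = (\<Sum>k\<in>S. A ** f k)"
  by (induction S rule: infinite_finite_induct) (simp_all add: matrix_add_ldistrib)

lemma smat_cancel:
  assumes "smat c M = smat d M" and "M \<noteq> 0"
  shows "c = d"
proof -
  obtain i j where "M $ i $ j \<noteq> 0" using assms(2) by (metis vec_eq_iff zero_index)
  moreover have "c * M $ i $ j = d * M $ i $ j" using assms(1) by (metis smat_index)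
  ultimately show ?thesis by simp
qed

lemma mat_1_neq_0: "(mat 1 :: 'f::field^'n^'n) \<noteq> 0"
proof
  assume "(mat 1 :: 'f^'n^'n) = 0"
  then have "(mat 1 :: 'f^'n^'n) $ i $ i = 0" for i by simp
  then show False by (simp add: mat_def)
qed

lemma invertible_neq_0: "invertible (M :: 'f::field^'n^'n) \<Longrightarrow> M \<noteq> 0"
  using mat_1_neq_0 by (auto simp: invertible_def)

lemma invertible_smat:
  assumes "invertible (M :: 'f::field^'n^'n)" and "c \<noteq> 0"
  shows "invertible (smat c M)"
proof -
  obtain B where "M ** B = mat 1" using assms(1) invertible_right_inverse by blast
  then have "smat c M ** smat (1/c) B = mat 1"
    using assms(2) by (simp add: smat_mult_left smat_mult_right smat_smat)
  then show ?thesis using invertible_right_inverse by blast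
qed

lemma invertible_mat_1: "invertible (mat 1 :: 'f::field^'n^'n)"
  using invertible_right_inverse by fastforce

lemma invertible_cancel_left:
  assumes "invertible (N :: 'f::field^'n^'n)" and "N ** A = N ** B"
  shows "A = B"
proof -
  obtain C where "C ** N = mat 1" using assms(1) invertible_left_inverse by blast
  then have "C ** (N ** A) = C ** (N ** B)" using assms(2) by simp
  then show ?thesis by (simp add: matrix_mul_assoc \<open>C ** N = mat 1\<close>)
qed

definition basis_vec :: "'i \<Rightarrow> 'a::zero \<Rightarrow> 'i \<Rightarrow> 'a" where
  "basis_vec i M = (\<lambda>k. if k = i then M else 0)"

lemma Vsp_iff: "x \<in> Vsp \<longleftrightarrow> finite {i. x i \<noteq> 0}"
  by (simp add: Vsp_def)

lemma basis_vec_in_Vsp: "basis_vec i M \<in> Vsp"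
  unfolding Vsp_iff by (rule finite_subset[of _ "{i}"]) (auto simp: basis_vec_def)

lemma support_basis_vec: "M \<noteq> 0 \<Longrightarrow> {k. basis_vec i M k \<noteq> 0} = {i}"
  by (auto simp: basis_vec_def)

lemma formB_eq_sum:
  assumes "finite S" and "{i. x i \<noteq> 0} \<subseteq> S" and "{j. y j \<noteq> 0} \<subseteq> S"
  shows "formB B x y = (\<Sum>i\<in>S. \<Sum>j\<in>S. transpose (x i) ** B i j ** y j)"
proof -
  have "formB B x y = (\<Sum>i\<in>{i. x i \<noteq> 0}. \<Sum>j\<in>S. transpose (x i) ** B i j ** y j)"
    unfolding formB_def by (intro sum.cong refl sum.mono_neutral_left assms(1,3)) auto
  also have "\<dots> = (\<Sum>i\<in>S. \<Sum>j\<in>S. transpose (x i) ** B i j ** y j)"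
    by (intro sum.mono_neutral_left assms(1,2)) auto
  finally show ?thesis .
qed

lemma formB_infinite_right: "infinite {j. y j \<noteq> 0} \<Longrightarrow> formB B x y = 0"
  unfolding formB_def by simp

lemma formB_0_left: "formB B (\<lambda>i. 0) x = 0"
  by (simp add: formB_def)

lemma formB_smat_left:
  assumes "d \<noteq> 0"
  shows "formB B (\<lambda>i. smat d (u i)) x = smat d (formB B u x)"
proof -
  have "smat d (u i) = 0 \<longleftrightarrow> u i = 0" for i
  proof
    assume "smat d (u i) = 0"
    then have "smat (1/d) (smat d (u i)) = 0" by simp
    then show "u i = 0" using assms by (simp add: smat_smat)
  qed simp
  then show ?thesis
    unfolding formB_def by (simp add: smat_sum transpose_smat smat_mult_left)
qed

lemma support_sum_smat_mult_subset:
  "{p. (\<Sum>k<n. smat (c k) (w k p ** M k)) \<noteq> 0} \<subseteq> (\<Union>k<n. {p. w k p \<noteq> 0})"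
  by (auto intro: ccontr simp: sum.neutral)

lemma formB_sum_left:
  fixes w :: "nat \<Rightarrow> 'i \<Rightarrow> 'f::field^'n^'n"
  assumes w: "\<forall>k<n. w k \<in> Vsp" and y: "y \<in> Vsp"
  shows "formB B (\<lambda>p. \<Sum>k<n. smat (c k) (w k p ** M k)) y
       = (\<Sum>k<n. smat (c k) (transpose (M k) ** formB B (w k) y))"
proof -
  define S where "S = {j. y j \<noteq> 0} \<union> (\<Union>k<n. {p. w k p \<noteq> 0})"
  have S: "finite S" using w y by (auto simp: S_def Vsp_iff)
  have sums: "{p. (\<Sum>k<n. smat (c k) (w k p ** M k)) \<noteq> 0} \<subseteq> S"
    unfolding S_def by (rule order_trans[OF support_sum_smat_mult_subset Un_upper2])
  have sw: "k < n \<Longrightarrow> {p. w k p \<noteq> 0} \<subseteq> S" and sy: "{j. y j \<noteq> 0} \<subseteq> S" for k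
    by (auto simp: S_def)
  have "formB B (\<lambda>p. \<Sum>k<n. smat (c k) (w k p ** M k)) y
      = (\<Sum>p\<in>S. \<Sum>j\<in>S. transpose (\<Sum>k<n. smat (c k) (w k p ** M k)) ** B p j ** y j)"
    by (rule formB_eq_sum[OF S sums sy])
  also have "\<dots> = (\<Sum>p\<in>S. \<Sum>j\<in>S. \<Sum>k<n. smat (c k) (transpose (M k) ** (transpose (w k p) ** B p j ** y j)))"
    by (simp add: transpose_sum transpose_smat matrix_transpose_mul matrix_sum_mult smat_mult_left
        matrix_mul_assoc)
  also have "\<dots> = (\<Sum>p\<in>S. \<Sum>k<n. \<Sum>j\<in>S. smat (c k) (transpose (M k) ** (transpose (w k p) ** B p j ** y j)))"
    by (rule sum.cong[OF refl], rule sum.swap)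
  also have "\<dots> = (\<Sum>k<n. \<Sum>p\<in>S. \<Sum>j\<in>S. smat (c k) (transpose (M k) ** (transpose (w k p) ** B p j ** y j)))"
    by (rule sum.swap)
  also have "\<dots> = (\<Sum>k<n. smat (c k) (transpose (M k) ** (\<Sum>p\<in>S. \<Sum>j\<in>S. transpose (w k p) ** B p j ** y j)))"
    by (simp add: smat_sum matrix_mult_sum)
  also have "\<dots> = (\<Sum>k<n. smat (c k) (transpose (M k) ** formB B (w k) y))"
    by (rule sum.cong[OF refl]) (simp add: formB_eq_sum[OF S sw sy])
  finally show ?thesis .
qed

lemma formB_sum_right:
  fixes w :: "nat \<Rightarrow> 'i \<Rightarrow> 'f::field^'n^'n"
  assumes w: "\<forall>k<n. w k \<in> Vsp" and x: "x \<in> Vsp"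
  shows "formB B x (\<lambda>p. \<Sum>k<n. smat (c k) (w k p ** M k))
       = (\<Sum>k<n. smat (c k) (formB B x (w k) ** M k))"
proof -
  define S where "S = {j. x j \<noteq> 0} \<union> (\<Union>k<n. {p. w k p \<noteq> 0})"
  have S: "finite S" using w x by (auto simp: S_def Vsp_iff)
  have sums: "{p. (\<Sum>k<n. smat (c k) (w k p ** M k)) \<noteq> 0} \<subseteq> S"
    unfolding S_def by (rule order_trans[OF support_sum_smat_mult_subset Un_upper2])
  have sw: "k < n \<Longrightarrow> {p. w k p \<noteq> 0} \<subseteq> S" and sx: "{j. x j \<noteq> 0} \<subseteq> S" for k
    by (auto simp: S_def)
  have "formB B x (\<lambda>p. \<Sum>k<n. smat (c k) (w k p ** M k))
      = (\<Sum>i\<in>S. \<Sum>j\<in>S. transpose (x i) ** B i j ** (\<Sum>k<n. smat (c k) (w k j ** M k)))"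
    by (rule formB_eq_sum[OF S sx sums])
  also have "\<dots> = (\<Sum>i\<in>S. \<Sum>j\<in>S. \<Sum>k<n. smat (c k) ((transpose (x i) ** B i j ** w k j) ** M k))"
    by (simp add: matrix_mult_sum smat_mult_right matrix_mul_assoc)
  also have "\<dots> = (\<Sum>i\<in>S. \<Sum>k<n. \<Sum>j\<in>S. smat (c k) ((transpose (x i) ** B i j ** w k j) ** M k))"
    by (rule sum.cong[OF refl], rule sum.swap)
  also have "\<dots> = (\<Sum>k<n. \<Sum>i\<in>S. \<Sum>j\<in>S. smat (c k) ((transpose (x i) ** B i j ** w k j) ** M k))"
    by (rule sum.swap)
  also have "\<dots> = (\<Sum>k<n. smat (c k) ((\<Sum>i\<in>S. \<Sum>j\<in>S. transpose (x i) ** B i j ** w k j) ** M k))"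
    by (simp add: smat_sum matrix_sum_mult)
  also have "\<dots> = (\<Sum>k<n. smat (c k) (formB B x (w k) ** M k))"
    by (rule sum.cong[OF refl]) (simp add: formB_eq_sum[OF S sx sw])
  finally show ?thesis .
qed

lemma formB_basis_vec_left:
  assumes "w \<in> Vsp"
  shows "formB B (basis_vec i (mat 1)) w = (\<Sum>j\<in>insert i {j. w j \<noteq> 0}. B i j ** w j)"
proof -
  define T where "T = insert i {j. w j \<noteq> 0}"
  have T: "finite T" using assms by (simp add: T_def Vsp_iff)
  have "formB B (basis_vec i (mat 1)) w
      = (\<Sum>k\<in>T. \<Sum>j\<in>T. transpose (basis_vec i (mat 1) k) ** B k j ** w j)"
    by (rule formB_eq_sum[OF T]) (auto simp: T_def basis_vec_def)
  also have "\<dots> = (\<Sum>k\<in>T. if k = i then (\<Sum>j\<in>T. B i j ** w j) else 0)"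
    by (rule sum.cong[OF refl]) (simp add: basis_vec_def)
  also have "\<dots> = (\<Sum>j\<in>T. B i j ** w j)"
    using T by (simp add: T_def)
  finally show ?thesis by (simp add: T_def)
qed

lemma set_mult_memI: "g \<in> x \<Longrightarrow> g' \<in> y \<Longrightarrow> g \<otimes>\<^bsub>G\<^esub> g' \<in> x <#>\<^bsub>G\<^esub> y"
  by (auto simp: set_mult_def)

lemma set_mult_memE: "g \<in> x <#>\<^bsub>G\<^esub> y \<Longrightarrow> \<exists>a\<in>x. \<exists>c\<in>y. g = a \<otimes>\<^bsub>G\<^esub> c"
  by (auto simp: set_mult_def)

context group
begin

lemma rcosets_eq_r_coset:
  assumes "subgroup N G" and "A \<in> rcosets N" and "a \<in> A"
  shows "A = N #> a"
proof -
  obtain c where "c \<in> carrier G" "A = N #> c" using assms(2) by (auto simp: RCOSETS_def)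
  then show ?thesis using repr_independence assms(1,3) by blast
qed

lemma rcosets_mem_carrier: "subgroup N G \<Longrightarrow> A \<in> rcosets N \<Longrightarrow> a \<in> A \<Longrightarrow> a \<in> carrier G"
  using subgroup.rcosets_carrier is_group by blast

lemma rcosets_nonempty: "subgroup N G \<Longrightarrow> A \<in> rcosets N \<Longrightarrow> \<exists>a. a \<in> A"
  using subgroup.rcosets_non_empty by blast

end

context comm_group
begin

lemma rcosets_mult_closed:
  assumes N: "subgroup N G" and A: "A \<in> rcosets N" and a: "a \<in> A" and t: "t \<in> N"
  shows "a \<otimes> t \<in> A"
proof -
  have "a \<in> carrier G" "t \<in> carrier G" using rcosets_mem_carrier N A a t subgroup.subset by blast+
  then show ?thesis
    using rcosets_eq_r_coset[OF N A a] rcosI[OF t] subgroup.subset[OF N] m_comm by force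
qed

lemma rcosets_mem_diff:
  assumes N: "subgroup N G" and A: "A \<in> rcosets N" and a: "a \<in> A" and a': "a' \<in> A"
  shows "\<exists>t\<in>N. a' = a \<otimes> t"
proof -
  obtain t where t: "t \<in> N" "a' = t \<otimes> a"
    using rcosets_eq_r_coset[OF N A a] a' by (auto simp: r_coset_def)
  have "a \<in> carrier G" "t \<in> carrier G" using rcosets_mem_carrier N A a t subgroup.subset by blast+
  then show ?thesis using t m_comm by auto
qed

end

section \<open>A character with value \<open>-1\<close> on an involution\<close>

locale involution_quotient = comm_group G for G :: "('g, 'z) monoid_scheme" (structure) +
  fixes h :: 'g and chi :: "'g \<Rightarrow> 'f::field" and H :: "'g set" and Gb :: "'g set monoid"
  assumes H_eq: "H = {\<one>, h}"
    and Gb_eq: "Gb = G Mod H"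
    and h_in: "h \<in> carrier G" and h_neq_one: "h \<noteq> \<one>" and h_sq: "h \<otimes> h = \<one>"
    and chi_nonzero: "\<forall>a\<in>carrier G. chi a \<noteq> 0"
    and chi_mult: "\<forall>a\<in>carrier G. \<forall>c\<in>carrier G. chi (a \<otimes> c) = chi a * chi c"
    and chi_h: "chi h = -1"
    and two_neq_zero: "(2::'f) \<noteq> 0"
begin

lemma H_subgroup: "subgroup H G"
proof
  have "inv h = h" using inv_equality[OF h_sq h_in h_in] .
  then show "x \<in> H \<Longrightarrow> inv x \<in> H" for x by (auto simp: H_eq)
qed (use h_in h_sq in \<open>auto simp: H_eq\<close>)

lemma H_normal: "H \<lhd> G"
  by (rule subgroup_imp_normal[OF H_subgroup])

sublocale Gb: comm_group Gb
  unfolding Gb_eq by (rule abelian_FactGroup[OF H_subgroup])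

lemma carrier_Gb: "carrier Gb = rcosets H"
  by (simp add: Gb_eq FactGroup_def)

lemma mult_Gb: "x \<otimes>\<^bsub>Gb\<^esub> y = x <#> y"
  by (simp add: Gb_eq)

lemma one_Gb: "\<one>\<^bsub>Gb\<^esub> = H"
  by (simp add: Gb_eq)

lemma Gb_mem_carrier: "x \<in> carrier Gb \<Longrightarrow> g \<in> x \<Longrightarrow> g \<in> carrier G"
  using rcosets_mem_carrier[OF H_subgroup] by (simp add: carrier_Gb)

lemma Gb_nonempty: "x \<in> carrier Gb \<Longrightarrow> \<exists>g. g \<in> x"
  using rcosets_nonempty[OF H_subgroup] by (simp add: carrier_Gb)

lemma Gb_eq_r_coset: "x \<in> carrier Gb \<Longrightarrow> g \<in> x \<Longrightarrow> x = H #> g"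
  using rcosets_eq_r_coset[OF H_subgroup] by (simp add: carrier_Gb)

lemma mult_Gb_memI: "g \<in> x \<Longrightarrow> g' \<in> y \<Longrightarrow> g \<otimes> g' \<in> x \<otimes>\<^bsub>Gb\<^esub> y"
  by (simp add: mult_Gb set_mult_memI)

lemma chi_one: "chi \<one> = 1"
proof -
  have "chi \<one> = chi \<one> * chi \<one>" using chi_mult by (metis l_one one_closed)
  then show ?thesis using chi_nonzero by (metis one_closed mult_cancel_left1)
qed

lemma chi_sq_H: "x \<in> H \<Longrightarrow> (chi x)^2 = 1"
  using chi_one chi_h by (auto simp: H_eq power2_eq_square)

lemma chi_sq_mult: "a \<in> carrier G \<Longrightarrow> c \<in> carrier G \<Longrightarrow> (chi (a \<otimes> c))^2 = (chi a)^2 * (chi c)^2"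
  using chi_mult by (simp add: power_mult_distrib)

lemma chi_sq_Gb_const:
  assumes x: "x \<in> carrier Gb" and g: "g \<in> x" and g': "g' \<in> x"
  shows "(chi g)^2 = (chi g')^2"
proof -
  have "g' \<in> H #> g" using Gb_eq_r_coset[OF x g] g' by simp
  then obtain k where k: "k \<in> H" "g' = k \<otimes> g" by (auto simp: r_coset_def)
  then show ?thesis
    using chi_sq_mult chi_sq_H Gb_mem_carrier[OF x g] subgroup.subset[OF H_subgroup] by auto
qed

lemma chi_sq_mult3:
  "a \<in> carrier G \<Longrightarrow> c \<in> carrier G \<Longrightarrow> d \<in> carrier G \<Longrightarrow>
    (chi (a \<otimes> c \<otimes> d))^2 = (chi a)^2 * (chi c)^2 * (chi d)^2"
  by (simp add: chi_sq_mult)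

lemma mult3_Gb_memE:
  "g \<in> x \<otimes>\<^bsub>Gb\<^esub> y \<otimes>\<^bsub>Gb\<^esub> z \<Longrightarrow> \<exists>a\<in>x. \<exists>c\<in>y. \<exists>d\<in>z. g = a \<otimes> c \<otimes> d"
  unfolding mult_Gb by (blast dest: set_mult_memE)

lemma one_neq_minus_one: "(1::'f) \<noteq> -1"
  using two_neq_zero by (metis add_eq_0_iff equation_minus_iff one_add_one)

lemma chi_h_mult: "x \<in> carrier G \<Longrightarrow> chi (h \<otimes> x) = - chi x"
  using chi_mult h_in chi_h by simp

text \<open>The complement of \<open>H\<close> in \<open>\<pi>\<^sup>-\<^sup>1(Tb)\<close> is the kernel of \<open>chi\<close>.\<close>

definition split_map :: "'g \<Rightarrow> 'g set \<times> 'g" where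
  "split_map x = (H #> x, if chi x = 1 then \<one> else h)"

context
  fixes Tb :: "'g set set"
  assumes Tb_subgroup: "subgroup Tb Gb" and Tb_exp2: "\<forall>t\<in>Tb. t \<otimes>\<^bsub>Gb\<^esub> t = \<one>\<^bsub>Gb\<^esub>"
begin

lemma Union_Tb_carrier: "x \<in> \<Union>Tb \<Longrightarrow> x \<in> carrier G"
  using Tb_subgroup subgroup.subset Gb_mem_carrier by blast

lemma Union_Tb_r_coset: "t \<in> Tb \<Longrightarrow> x \<in> t \<Longrightarrow> t = H #> x"
  using Tb_subgroup subgroup.subset Gb_eq_r_coset by blast

lemma one_in_Union_Tb: "\<one> \<in> \<Union>Tb"
  using subgroup.one_closed[OF Tb_subgroup] by (auto simp: one_Gb H_eq)

lemma Union_Tb_sq_closed: "x \<in> \<Union>Tb \<Longrightarrow> x \<otimes> x \<in> \<Union>Tb"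
  using mult_Gb_memI subgroup.m_closed[OF Tb_subgroup] by blast

lemma split_imp_chi_sq_trivial:
  assumes "G\<lparr>carrier := \<Union>Tb\<rparr> \<cong> Gb\<lparr>carrier := Tb\<rparr> \<times>\<times> G\<lparr>carrier := H\<rparr>"
  shows "\<forall>y\<in>\<Union>Tb. (chi y)^2 = 1"
proof
  fix x assume x: "x \<in> \<Union>Tb"
  obtain f where f: "f \<in> iso (G\<lparr>carrier := \<Union>Tb\<rparr>) (Gb\<lparr>carrier := Tb\<rparr> \<times>\<times> G\<lparr>carrier := H\<rparr>)"
    using assms by (auto simp: is_iso_def)
  then have f_hom: "f \<in> hom (G\<lparr>carrier := \<Union>Tb\<rparr>) (Gb\<lparr>carrier := Tb\<rparr> \<times>\<times> G\<lparr>carrier := H\<rparr>)"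
    and f_inj: "inj_on f (\<Union>Tb)"
    by (auto simp: iso_def bij_betw_def)
  \<comment> \<open>both factors have exponent 2, so \<open>f\<close> maps every square to the identity\<close>
  have f_sq: "f (y \<otimes> y) = (H, \<one>)" if y: "y \<in> \<Union>Tb" for y
  proof -
    have "f (y \<otimes> y) = (fst (f y) \<otimes>\<^bsub>Gb\<^esub> fst (f y), snd (f y) \<otimes> snd (f y))"
      using hom_mult[OF f_hom, of y y] y by (simp add: DirProd_def case_prod_beta)
    moreover have "f y \<in> Tb \<times> H" using hom_in_carrier[OF f_hom] y by simp
    ultimately show ?thesis using Tb_exp2 h_sq by (auto simp: H_eq one_Gb)
  qed
  have "f (x \<otimes> x) = f \<one>" using f_sq[OF x] f_sq[OF one_in_Union_Tb] by simp
  then have "x \<otimes> x = \<one>"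
    using inj_onD[OF f_inj _ Union_Tb_sq_closed[OF x] one_in_Union_Tb] by blast
  then have "chi x * chi x = 1"
    using chi_mult chi_one Union_Tb_carrier[OF x] by force
  then show "(chi x)^2 = 1" by (simp add: power2_eq_square)
qed

lemma split_map_in: "x \<in> \<Union>Tb \<Longrightarrow> split_map x \<in> Tb \<times> H"
  unfolding split_map_def using Union_Tb_r_coset by (auto simp: H_eq)

context
  assumes triv: "\<forall>y\<in>\<Union>Tb. (chi y)^2 = 1"
begin

lemma chi_Union_Tb_sign: "x \<in> \<Union>Tb \<Longrightarrow> chi x = 1 \<or> chi x = -1"
  using triv power2_eq_1_iff by blast

lemma split_map_hom: "split_map \<in> hom (G\<lparr>carrier := \<Union>Tb\<rparr>) (Gb\<lparr>carrier := Tb\<rparr> \<times>\<times> G\<lparr>carrier := H\<rparr>)"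
proof (rule homI)
  fix x y assume "x \<in> carrier (G\<lparr>carrier := \<Union>Tb\<rparr>)" "y \<in> carrier (G\<lparr>carrier := \<Union>Tb\<rparr>)"
  then have x: "x \<in> \<Union>Tb" and y: "y \<in> \<Union>Tb" by auto
  have xy: "x \<in> carrier G" "y \<in> carrier G" using x y Union_Tb_carrier by auto
  have "H #> (x \<otimes> y) = (H #> x) \<otimes>\<^bsub>Gb\<^esub> (H #> y)"
    using normal.rcos_sum[OF H_normal xy] by (simp add: mult_Gb)
  moreover have "(if chi (x \<otimes> y) = 1 then \<one> else h) = (if chi x = 1 then \<one> else h) \<otimes> (if chi y = 1 then \<one> else h)"
    using chi_Union_Tb_sign[OF x] chi_Union_Tb_sign[OF y] chi_mult xy one_neq_minus_one h_sq h_in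
    by auto
  ultimately show "split_map (x \<otimes>\<^bsub>G\<lparr>carrier := \<Union>Tb\<rparr>\<^esub> y)
      = split_map x \<otimes>\<^bsub>Gb\<lparr>carrier := Tb\<rparr> \<times>\<times> G\<lparr>carrier := H\<rparr>\<^esub> split_map y"
    by (simp add: split_map_def DirProd_def)
qed (use split_map_in in simp)

lemma split_map_inj: "inj_on split_map (\<Union>Tb)"
proof (rule inj_onI)
  fix x y assume x: "x \<in> \<Union>Tb" and y: "y \<in> \<Union>Tb" and e: "split_map x = split_map y"
  have xy: "x \<in> carrier G" "y \<in> carrier G" using x y Union_Tb_carrier by auto
  have "y \<in> H #> x" using e rcos_self[OF xy(2) H_subgroup] by (simp add: split_map_def)
  then obtain k where k: "k \<in> H" "y = k \<otimes> x" by (auto simp: r_coset_def)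
  show "x = y"
  proof (cases "k = h")
    case True
    then have "chi y = - chi x" using chi_h_mult[OF xy(1)] k by simp
    then show ?thesis
      using e chi_Union_Tb_sign[OF x] chi_Union_Tb_sign[OF y] one_neq_minus_one h_neq_one
      by (auto simp: split_map_def split: if_splits)
  qed (use k xy in \<open>simp add: H_eq\<close>)
qed

lemma split_map_surj: "Tb \<times> H \<subseteq> split_map ` \<Union>Tb"
proof
  fix p assume "p \<in> Tb \<times> H"
  then obtain t k where tk: "p = (t, k)" "t \<in> Tb" "k \<in> H" by auto
  obtain c where c: "c \<in> t" using Gb_nonempty tk(2) Tb_subgroup subgroup.subset by blast
  have cU: "c \<in> \<Union>Tb" using c tk(2) by blast
  have cG: "c \<in> carrier G" using Union_Tb_carrier[OF cU] .
  have t_eq: "t = H #> c" using Union_Tb_r_coset[OF tk(2) c] .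
  have hc: "h \<otimes> c \<in> t"
    using rcosI[of h H c] cG h_in t_eq subgroup.subset[OF H_subgroup] by (auto simp: H_eq)
  show "p \<in> split_map ` \<Union>Tb"
  proof (cases "(if chi c = 1 then \<one> else h) = k")
    case True
    then show ?thesis using c tk t_eq by (auto simp: split_map_def)
  next
    case False
    then have "(if chi (h \<otimes> c) = 1 then \<one> else h) = k"
      using tk(3) chi_Union_Tb_sign[OF cU] chi_h_mult[OF cG] one_neq_minus_one h_neq_one
      by (auto simp: H_eq)
    then show ?thesis
      using hc tk Union_Tb_r_coset[OF tk(2) hc] by (auto simp: split_map_def)
  qed
qed

lemma chi_sq_trivial_imp_split: "G\<lparr>carrier := \<Union>Tb\<rparr> \<cong> Gb\<lparr>carrier := Tb\<rparr> \<times>\<times> G\<lparr>carrier := H\<rparr>"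
proof -
  have "split_map ` \<Union>Tb = Tb \<times> H" using split_map_in split_map_surj by blast
  then have "bij_betw split_map (\<Union>Tb) (Tb \<times> H)" using split_map_inj by (simp add: bij_betw_def)
  then show ?thesis using split_map_hom unfolding is_iso_def iso_def by auto
qed

end

lemma split_iff_chi_sq_trivial:
  "G\<lparr>carrier := \<Union>Tb\<rparr> \<cong> Gb\<lparr>carrier := Tb\<rparr> \<times>\<times> G\<lparr>carrier := H\<rparr>
     \<longleftrightarrow> (\<forall>y\<in>\<Union>Tb. (chi y)^2 = 1)"
  using split_imp_chi_sq_trivial chi_sq_trivial_imp_split by auto

end

end


section \<open>The graded algebra \<open>\<R>\<close> and its antiautomorphism\<close>

text \<open>In the notation of the statement, \<open>Q = Gb Mod Tb\<close>, \<open>g0c\<close> is the class of \<open>g0\<close> in \<open>Q\<close>,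
  \<open>dg i\<close> is the degree of the \<open>i\<close>-th homogeneous basis vector \<open>e\<^sub>i\<close> of V~, and \<open>b i j\<close> is \<open>B~(e\<^sub>i, e\<^sub>j)\<close>.\<close>

locale graded_form = involution_quotient G h chi H Gb
  for G :: "('g, 'z) monoid_scheme" (structure) and h :: 'g and chi :: "'g \<Rightarrow> 'f::field"
    and H :: "'g set" and Gb :: "'g set monoid" +
  fixes Tb :: "'g set set" and X :: "'g set \<Rightarrow> 'f::field^'n^'n" and beta :: "'g set \<Rightarrow> 'f"
    and g0 :: "'g set" and dg :: "'i \<Rightarrow> 'g set set" and b :: "'i \<Rightarrow> 'i \<Rightarrow> 'f"
    and mu :: "'g set set \<Rightarrow> 'f" and gam :: "'g set set \<Rightarrow> 'g set"
    and Q :: "'g set set monoid" and g0c :: "'g set set"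
  assumes Q_eq: "Q = Gb Mod Tb"
    and g0c_eq: "g0c = Tb #>\<^bsub>Gb\<^esub> g0"
    and Tb_subgroup: "subgroup Tb Gb"
    and Tb_exp2: "\<forall>t\<in>Tb. t \<otimes>\<^bsub>Gb\<^esub> t = \<one>\<^bsub>Gb\<^esub>"
    and X_invertible: "\<forall>t\<in>Tb. invertible (X t)"
    and X_transpose: "\<forall>t\<in>Tb. transpose (X t) = smat (beta t) (X t)"
    and beta_sign: "\<forall>t\<in>Tb. beta t = 1 \<or> beta t = -1"
    and g0_in: "g0 \<in> carrier Gb"
    and dg_in: "\<forall>i. dg i \<in> carrier Q"
    and b_support: "\<forall>i j. b i j \<noteq> 0 \<longrightarrow> g0c \<otimes>\<^bsub>Q\<^esub> dg i \<otimes>\<^bsub>Q\<^esub> dg j = \<one>\<^bsub>Q\<^esub>"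
    and b_nondegenerate: "\<forall>c::'i \<Rightarrow> 'f. finite {i. c i \<noteq> 0} \<and> (\<exists>i. c i \<noteq> 0) \<longrightarrow>
                            (\<exists>j. (\<Sum>i\<in>{i. c i \<noteq> 0}. c i * b i j) \<noteq> 0)"
    and mu_nonzero: "\<forall>A\<in>carrier Q. mu A \<noteq> 0"
    and b_mu: "\<forall>i j. dg j = inv\<^bsub>Q\<^esub> (g0c \<otimes>\<^bsub>Q\<^esub> dg i) \<longrightarrow> b j i = mu (dg i) * b i j"
    and gam_in: "\<forall>A\<in>carrier Q. gam A \<in> A"
begin

sublocale Q: comm_group Q
  unfolding Q_eq by (rule Gb.abelian_FactGroup[OF Tb_subgroup])

lemma carrier_Q: "carrier Q = rcosets\<^bsub>Gb\<^esub> Tb"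
  by (simp add: Q_eq FactGroup_def)

lemma Q_eq_r_coset: "A \<in> carrier Q \<Longrightarrow> a \<in> A \<Longrightarrow> A = Tb #>\<^bsub>Gb\<^esub> a"
  using Gb.rcosets_eq_r_coset[OF Tb_subgroup] by (simp add: carrier_Q)

lemma Q_mem_carrier: "A \<in> carrier Q \<Longrightarrow> a \<in> A \<Longrightarrow> a \<in> carrier Gb"
  using Gb.rcosets_mem_carrier[OF Tb_subgroup] by (simp add: carrier_Q)

lemma Q_mult_Tb_closed: "A \<in> carrier Q \<Longrightarrow> a \<in> A \<Longrightarrow> t \<in> Tb \<Longrightarrow> a \<otimes>\<^bsub>Gb\<^esub> t \<in> A"
  using Gb.rcosets_mult_closed[OF Tb_subgroup] by (simp add: carrier_Q)

lemma Q_mem_diff: "A \<in> carrier Q \<Longrightarrow> a \<in> A \<Longrightarrow> a' \<in> A \<Longrightarrow> \<exists>t\<in>Tb. a' = a \<otimes>\<^bsub>Gb\<^esub> t"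
  using Gb.rcosets_mem_diff[OF Tb_subgroup] by (simp add: carrier_Q)

lemma dg_carrier [simp]: "dg i \<in> carrier Q"
  using dg_in by blast

lemma gam_dg: "gam (dg i) \<in> dg i"
  using gam_in by simp

lemma dg_mem_carrier: "a \<in> dg i \<Longrightarrow> a \<in> carrier Gb"
  using Q_mem_carrier dg_carrier by blast

lemma dg_eq_of_mem: "a \<in> dg i \<Longrightarrow> a \<in> dg j \<Longrightarrow> dg i = dg j"
  using Q_eq_r_coset[OF dg_carrier] by blast

lemma g0c_carrier: "g0c \<in> carrier Q"
  using g0_in Tb_subgroup subgroup.subset
  by (auto simp: g0c_eq carrier_Q intro!: Gb.rcosetsI)

lemma dual_product_in_Tb:
  assumes A: "A \<in> carrier Q" and B: "B \<in> carrier Q"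
    and dual: "g0c \<otimes>\<^bsub>Q\<^esub> A \<otimes>\<^bsub>Q\<^esub> B = \<one>\<^bsub>Q\<^esub>" and a: "a \<in> A" and a': "a' \<in> B"
  shows "g0 \<otimes>\<^bsub>Gb\<^esub> a \<otimes>\<^bsub>Gb\<^esub> a' \<in> Tb"
proof -
  have carr: "a \<in> carrier Gb" "a' \<in> carrier Gb" using A B a a' Q_mem_carrier by auto
  have "Tb #>\<^bsub>Gb\<^esub> (g0 \<otimes>\<^bsub>Gb\<^esub> a \<otimes>\<^bsub>Gb\<^esub> a') = g0c \<otimes>\<^bsub>Q\<^esub> A \<otimes>\<^bsub>Q\<^esub> B"
    using normal.rcos_sum[OF Gb.subgroup_imp_normal[OF Tb_subgroup]] g0_in carr
    by (simp add: Q_eq g0c_eq Q_eq_r_coset[OF A a, unfolded Q_eq] Q_eq_r_coset[OF B a', unfolded Q_eq])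
  then show ?thesis
    using Gb.coset_join1[OF _ _ Tb_subgroup] dual g0_in carr by (simp add: Q_eq)
qed

lemma dual_sym:
  assumes "A \<in> carrier Q" and "B \<in> carrier Q" and "g0c \<otimes>\<^bsub>Q\<^esub> A \<otimes>\<^bsub>Q\<^esub> B = \<one>\<^bsub>Q\<^esub>"
  shows "g0c \<otimes>\<^bsub>Q\<^esub> B \<otimes>\<^bsub>Q\<^esub> A = \<one>\<^bsub>Q\<^esub>"
  using assms by (simp add: Q.m_assoc Q.m_comm[of B A] g0c_carrier)

lemma dual_eq_inv:
  assumes A: "A \<in> carrier Q" and B: "B \<in> carrier Q" and dual: "g0c \<otimes>\<^bsub>Q\<^esub> A \<otimes>\<^bsub>Q\<^esub> B = \<one>\<^bsub>Q\<^esub>"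
  shows "B = inv\<^bsub>Q\<^esub> (g0c \<otimes>\<^bsub>Q\<^esub> A)"
proof -
  have gA: "g0c \<otimes>\<^bsub>Q\<^esub> A \<in> carrier Q" using A g0c_carrier by simp
  then have "B \<otimes>\<^bsub>Q\<^esub> (g0c \<otimes>\<^bsub>Q\<^esub> A) = \<one>\<^bsub>Q\<^esub>" using B dual Q.m_comm by simp
  then show ?thesis using Q.inv_equality gA B by simp
qed

definition selfdual :: "'g set set \<Rightarrow> bool" where
  "selfdual A \<longleftrightarrow> g0c \<otimes>\<^bsub>Q\<^esub> A \<otimes>\<^bsub>Q\<^esub> A = \<one>\<^bsub>Q\<^esub>"

lemma dual_of_selfdual:
  assumes A: "A \<in> carrier Q" and B: "B \<in> carrier Q" and dual: "g0c \<otimes>\<^bsub>Q\<^esub> A \<otimes>\<^bsub>Q\<^esub> B = \<one>\<^bsub>Q\<^esub>"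
    and "selfdual A \<or> selfdual B"
  shows "B = A"
  using assms(4)
proof
  assume "selfdual A"
  then show ?thesis
    using dual_eq_inv[OF A B dual] dual_eq_inv[OF A A] unfolding selfdual_def by simp
next
  assume "selfdual B"
  then show ?thesis
    using dual_eq_inv[OF B A dual_sym[OF A B dual]] dual_eq_inv[OF B B] unfolding selfdual_def by simp
qed

definition tau :: "'g set set \<Rightarrow> 'g set" where
  "tau A = g0 \<otimes>\<^bsub>Gb\<^esub> gam A \<otimes>\<^bsub>Gb\<^esub> gam A"

text \<open>\<open>B(x, y)\<^sup>T = B(y, \<Delta> x)\<close>, where \<open>\<Delta>\<close> multiplies the \<open>e\<^sub>i\<close>-component by \<open>delta (dg i)\<close>.\<close>

definition delta :: "'g set set \<Rightarrow> 'f" where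
  "delta A = (if selfdual A then 1 / (mu A * beta (tau A)) else 1 / mu A)"

lemma tau_in_Tb: "A \<in> carrier Q \<Longrightarrow> selfdual A \<Longrightarrow> tau A \<in> Tb"
  unfolding tau_def selfdual_def using dual_product_in_Tb gam_in by blast

lemma beta_tau_sq: "A \<in> carrier Q \<Longrightarrow> selfdual A \<Longrightarrow> beta (tau A) * beta (tau A) = 1"
  using tau_in_Tb beta_sign by fastforce

lemma delta_nonzero:
  assumes A: "A \<in> carrier Q"
  shows "delta A \<noteq> 0"
proof -
  have "selfdual A \<Longrightarrow> beta (tau A) \<noteq> 0" using beta_tau_sq[OF A] by auto
  then show ?thesis using mu_nonzero A by (simp add: delta_def)
qed

lemma b_swap: "b i j = mu (dg j) * b j i"
proof (cases "b i j = 0 \<and> b j i = 0")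
  case False
  then have "g0c \<otimes>\<^bsub>Q\<^esub> dg j \<otimes>\<^bsub>Q\<^esub> dg i = \<one>\<^bsub>Q\<^esub>"
    using b_support dual_sym[OF dg_carrier dg_carrier] by blast
  then show ?thesis using b_mu dual_eq_inv[OF dg_carrier dg_carrier] by blast
qed simp

lemma delta_mult_dual:
  assumes bij: "b i j \<noteq> 0"
  shows "delta (dg i) * delta (dg j) = 1"
proof -
  have "b i j = mu (dg j) * (mu (dg i) * b i j)" using b_swap[of i j] b_swap[of j i] by simp
  then have "1 * b i j = (mu (dg i) * mu (dg j)) * b i j" by (simp add: ac_simps)
  then have mu: "mu (dg i) * mu (dg j) = 1" using bij by (metis mult_cancel_right)
  have dual: "g0c \<otimes>\<^bsub>Q\<^esub> dg i \<otimes>\<^bsub>Q\<^esub> dg j = \<one>\<^bsub>Q\<^esub>" using b_support bij by blast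
  show ?thesis
  proof (cases "selfdual (dg i) \<or> selfdual (dg j)")
    case True
    then have j: "dg j = dg i" using dual_of_selfdual[OF dg_carrier dg_carrier dual] by blast
    then have "selfdual (dg i)" using True by simp
    then show ?thesis
      using mu j beta_tau_sq[OF dg_carrier] by (simp add: delta_def field_simps)
  next
    case False
    then show ?thesis using mu by (simp add: delta_def)
  qed
qed

lemma b_row_nonzero: "\<exists>j. b i j \<noteq> 0"
proof -
  have "finite {k. basis_vec i (1::'f) k \<noteq> 0} \<and> (\<exists>k. basis_vec i (1::'f) k \<noteq> 0)"
    using support_basis_vec[of "1::'f" i] by auto
  then obtain j where "(\<Sum>k\<in>{k. basis_vec i (1::'f) k \<noteq> 0}. basis_vec i 1 k * b k j) \<noteq> 0"
    using b_nondegenerate by blast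
  then show ?thesis unfolding support_basis_vec[OF one_neq_zero] by (auto simp: basis_vec_def)
qed

definition delta_law :: bool where
  "delta_law \<longleftrightarrow> (\<forall>i j. \<forall>a\<in>dg i. \<forall>a'\<in>dg j. \<forall>g\<in>g0 \<otimes>\<^bsub>Gb\<^esub> a \<otimes>\<^bsub>Gb\<^esub> a'.
     delta (dg i) * delta (dg j) = (chi g)^2)"

definition delta_uniform :: bool where
  "delta_uniform \<longleftrightarrow> (\<exists>mu0. mu0 \<noteq> 0 \<and> (\<forall>A\<in>range dg. \<forall>a\<in>A. \<forall>g\<in>a. delta A = (chi g)^2 / mu0))"

lemma obtain_representatives:
  obtains w p where "w \<in> g0" "w \<in> carrier G" "p \<in> gam (dg i)" "p \<in> carrier G"
proof -
  obtain w p where "w \<in> g0" "p \<in> gam (dg i)"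
    using Gb_nonempty[OF g0_in] Gb_nonempty[OF dg_mem_carrier[OF gam_dg]] by blast
  then show thesis using that Gb_mem_carrier[OF g0_in] Gb_mem_carrier[OF dg_mem_carrier[OF gam_dg]] by blast
qed

lemma delta_law_imp_chi_sq_trivial:
  assumes law: delta_law
  shows "\<forall>y\<in>\<Union>Tb. (chi y)^2 = 1"
proof
  fix x assume "x \<in> \<Union>Tb"
  then obtain t where t: "t \<in> Tb" "x \<in> t" by blast
  have x: "x \<in> carrier G" using t Tb_subgroup subgroup.subset Gb_mem_carrier by blast
  obtain i :: 'i where True by simp
  obtain w p where w: "w \<in> g0" "w \<in> carrier G" and p: "p \<in> gam (dg i)" "p \<in> carrier G"
    using obtain_representatives by blast
  have shifted: "gam (dg i) \<otimes>\<^bsub>Gb\<^esub> t \<in> dg i" using Q_mult_Tb_closed gam_dg t(1) by simp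
  have "delta (dg i) * delta (dg i) = (chi (w \<otimes> p \<otimes> p))^2"
    using law gam_dg mult_Gb_memI[OF mult_Gb_memI[OF w(1) p(1)] p(1)] unfolding delta_law_def by blast
  moreover have "delta (dg i) * delta (dg i) = (chi (w \<otimes> (p \<otimes> x) \<otimes> p))^2"
    using law gam_dg shifted mult_Gb_memI[OF mult_Gb_memI[OF w(1) mult_Gb_memI[OF p(1) t(2)]] p(1)]
    unfolding delta_law_def by blast
  ultimately have "(chi w)^2 * (chi p)^2 * (chi p)^2 = (chi w)^2 * ((chi p)^2 * (chi x)^2) * (chi p)^2"
    using w p x by (simp add: chi_sq_mult3 chi_sq_mult)
  then show "(chi x)^2 = 1" using chi_nonzero w p by simp
qed

lemma delta_law_imp_uniform:
  assumes law: delta_law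
  shows delta_uniform
proof -
  obtain i0 :: 'i where True by simp
  define d0 where "d0 = delta (dg i0)"
  obtain w p where w: "w \<in> g0" "w \<in> carrier G" and p: "p \<in> gam (dg i0)" "p \<in> carrier G"
    using obtain_representatives by blast
  have law0: "delta A * d0 = (chi w)^2 * (chi g)^2 * (chi p)^2"
    if A: "A \<in> range dg" and a: "a \<in> A" and g: "g \<in> a" for A a g
  proof -
    obtain i where i: "A = dg i" using A by blast
    have "g \<in> carrier G" using Gb_mem_carrier dg_mem_carrier a g i by blast
    moreover have "delta A * d0 = (chi (w \<otimes> g \<otimes> p))^2"
      using law a i gam_dg mult_Gb_memI[OF mult_Gb_memI[OF w(1) g] p(1)]
      unfolding delta_law_def d0_def by blast
    ultimately show ?thesis using w p by (simp add: chi_sq_mult3)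
  qed
  have nz: "(chi p)^2 \<noteq> 0" "d0 \<noteq> 0" using chi_nonzero p delta_nonzero by (auto simp: d0_def)
  have "delta A = (chi g)^2 / ((chi p)^2 / d0)" if "A \<in> range dg" "a \<in> A" "g \<in> a" for A a g
  proof -
    have "delta A * (chi p)^2 * d0 = (delta A * d0) * (chi p)^2" by (simp add: ac_simps)
    also have "\<dots> = (chi g)^2 * ((chi w)^2 * (chi p)^2 * (chi p)^2)"
      using law0[OF that] by (simp add: ac_simps)
    also have "\<dots> = (chi g)^2 * (d0 * d0)"
      using law0[of "dg i0" "gam (dg i0)" p] gam_dg p by (simp add: d0_def)
    finally show ?thesis using nz by (simp add: field_simps power2_eq_square)
  qed
  moreover have "(chi p)^2 / d0 \<noteq> 0" using nz by simp
  ultimately show ?thesis unfolding delta_uniform_def by blast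
qed

lemma chi_sq_g0:
  assumes triv: "\<forall>y\<in>\<Union>Tb. (chi y)^2 = 1" and mu0: "mu0 \<noteq> 0"
    and delta_eq: "\<forall>A\<in>range dg. \<forall>a\<in>A. \<forall>g\<in>a. delta A = (chi g)^2 / mu0"
    and w: "w \<in> g0"
  shows "(chi w)^2 = 1 / mu0^2"
proof -
  obtain i0 j0 where ij: "b i0 j0 \<noteq> 0" using b_row_nonzero by blast
  obtain w0 p where w0: "w0 \<in> g0" "w0 \<in> carrier G" and p: "p \<in> gam (dg i0)" "p \<in> carrier G"
    using obtain_representatives by blast
  obtain q where q: "q \<in> gam (dg j0)" "q \<in> carrier G"
    using obtain_representatives by blast
  have "g0 \<otimes>\<^bsub>Gb\<^esub> gam (dg i0) \<otimes>\<^bsub>Gb\<^esub> gam (dg j0) \<in> Tb"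
    using dual_product_in_Tb[OF dg_carrier dg_carrier _ gam_dg gam_dg] b_support ij by blast
  then have "(chi (w0 \<otimes> p \<otimes> q))^2 = 1"
    using triv mult_Gb_memI[OF mult_Gb_memI[OF w0(1) p(1)] q(1)] by blast
  moreover have "(chi p)^2 * (chi q)^2 = mu0^2"
  proof -
    have "delta (dg i0) = (chi p)^2 / mu0" "delta (dg j0) = (chi q)^2 / mu0"
      using delta_eq gam_dg p q by blast+
    then have "(chi p)^2 = mu0 * delta (dg i0)" "(chi q)^2 = mu0 * delta (dg j0)"
      using mu0 by simp_all
    then show ?thesis using delta_mult_dual[OF ij] by (simp add: power2_eq_square ac_simps)
  qed
  ultimately have "(chi w0)^2 * mu0^2 = 1"
    using w0 p q by (simp add: chi_sq_mult3 mult.assoc)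
  then show ?thesis
    using chi_sq_Gb_const[OF g0_in w w0(1)] mu0 by (simp add: field_simps)
qed

lemma uniform_imp_delta_law:
  assumes triv: "\<forall>y\<in>\<Union>Tb. (chi y)^2 = 1" and uniform: delta_uniform
  shows delta_law
  unfolding delta_law_def
proof (intro allI ballI)
  obtain mu0 where mu0: "mu0 \<noteq> 0"
    and delta_eq: "\<forall>A\<in>range dg. \<forall>a\<in>A. \<forall>g\<in>a. delta A = (chi g)^2 / mu0"
    using uniform unfolding delta_uniform_def by blast
  fix i j a a' g assume a: "a \<in> dg i" and a': "a' \<in> dg j" and g: "g \<in> g0 \<otimes>\<^bsub>Gb\<^esub> a \<otimes>\<^bsub>Gb\<^esub> a'"
  obtain w x y where wxy: "w \<in> g0" "x \<in> a" "y \<in> a'" "g = w \<otimes> x \<otimes> y"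
    using mult3_Gb_memE[OF g] by blast
  have "w \<in> carrier G" "x \<in> carrier G" "y \<in> carrier G"
    using wxy a a' g0_in dg_mem_carrier Gb_mem_carrier by blast+
  then have "(chi g)^2 = (chi x)^2 * (chi y)^2 / mu0^2"
    using chi_sq_g0[OF triv mu0 delta_eq wxy(1)] wxy(4) by (simp add: chi_sq_mult3)
  moreover have "delta (dg i) = (chi x)^2 / mu0" "delta (dg j) = (chi y)^2 / mu0"
    using delta_eq a a' wxy by auto
  ultimately show "delta (dg i) * delta (dg j) = (chi g)^2"
    by (simp add: power2_eq_square)
qed

lemma delta_law_iff: "delta_law \<longleftrightarrow> (\<forall>y\<in>\<Union>Tb. (chi y)^2 = 1) \<and> delta_uniform"
  using delta_law_imp_chi_sq_trivial delta_law_imp_uniform uniform_imp_delta_law by blast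

lemma mu_formula_iff_delta:
  assumes A: "A \<in> carrier Q" and g: "g \<in> carrier G" and mu0: "mu0 \<noteq> 0"
  shows "mu A = (if selfdual A then mu0 / (chi g)^2 * beta (tau A) else mu0 / (chi g)^2)
     \<longleftrightarrow> delta A = (chi g)^2 / mu0"
proof -
  have c: "(chi g)^2 \<noteq> 0" and m: "mu A \<noteq> 0" using chi_nonzero g mu_nonzero A by auto
  show ?thesis
  proof (cases "selfdual A")
    case True
    have s: "beta (tau A) * beta (tau A) = 1" using beta_tau_sq[OF A True] .
    then have "beta (tau A) \<noteq> 0" by auto
    then have "1 / (mu A * beta (tau A)) = (chi g)^2 / mu0 \<longleftrightarrow> mu A * beta (tau A) = mu0 / (chi g)^2"
      using m c mu0 by (auto simp: field_simps)
    also have "\<dots> \<longleftrightarrow> mu A = mu0 / (chi g)^2 * beta (tau A)"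
    proof
      assume "mu A * beta (tau A) = mu0 / (chi g)^2"
      then have "mu A * (beta (tau A) * beta (tau A)) = mu0 / (chi g)^2 * beta (tau A)"
        by (simp add: mult.assoc[symmetric])
      then show "mu A = mu0 / (chi g)^2 * beta (tau A)" using s by simp
    qed (use s in \<open>simp add: mult.assoc\<close>)
    finally show ?thesis using True by (simp add: delta_def)
  qed (use m c mu0 in \<open>auto simp: delta_def field_simps\<close>)
qed

lemma delta_uniform_iff:
  "delta_uniform \<longleftrightarrow> (\<exists>mu0. mu0 \<noteq> 0 \<and> (\<forall>A\<in>range dg. \<forall>a\<in>A. \<forall>g\<in>a.
     mu A = (if g0c \<otimes>\<^bsub>Q\<^esub> A \<otimes>\<^bsub>Q\<^esub> A = \<one>\<^bsub>Q\<^esub>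
             then mu0 / (chi g)^2 * beta (g0 \<otimes>\<^bsub>Gb\<^esub> gam A \<otimes>\<^bsub>Gb\<^esub> gam A)
             else mu0 / (chi g)^2)))"
proof -
  have "(mu A = (if g0c \<otimes>\<^bsub>Q\<^esub> A \<otimes>\<^bsub>Q\<^esub> A = \<one>\<^bsub>Q\<^esub>
             then mu0 / (chi g)^2 * beta (g0 \<otimes>\<^bsub>Gb\<^esub> gam A \<otimes>\<^bsub>Gb\<^esub> gam A)
             else mu0 / (chi g)^2)) \<longleftrightarrow> delta A = (chi g)^2 / mu0"
    if mu0: "mu0 \<noteq> 0" and A: "A \<in> range dg" and a: "a \<in> A" and g: "g \<in> a" for mu0 A a g
  proof -
    have "A \<in> carrier Q" "g \<in> carrier G" using A a g dg_mem_carrier Gb_mem_carrier by auto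
    from mu_formula_iff_delta[OF this mu0] show ?thesis unfolding selfdual_def tau_def .
  qed
  then show ?thesis unfolding delta_uniform_def
    by (intro ex_cong1 conj_cong refl ball_cong) blast
qed

abbreviation Bhat :: "'i \<Rightarrow> 'i \<Rightarrow> 'f^'n^'n" where
  "Bhat \<equiv> bhat Gb Tb X gam dg g0 b"

definition bhat_factor :: "'i \<Rightarrow> 'f^'n^'n" where
  "bhat_factor i = (if selfdual (dg i) then X (tau (dg i)) else mat 1)"

definition Delta :: "('i \<Rightarrow> 'f^'n^'n) \<Rightarrow> 'i \<Rightarrow> 'f^'n^'n" where
  "Delta x = (\<lambda>i. smat (delta (dg i)) (x i))"

lemma Bhat_eq_smat: "Bhat i j = smat (b i j) (bhat_factor i)"
proof (cases "b i j = 0")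
  case False
  then have dual: "g0c \<otimes>\<^bsub>Q\<^esub> dg i \<otimes>\<^bsub>Q\<^esub> dg j = \<one>\<^bsub>Q\<^esub>" using b_support by blast
  show ?thesis
  proof (cases "selfdual (dg i)")
    case True
    then have "dg j = dg i" using dual_of_selfdual[OF dg_carrier dg_carrier dual] by blast
    then show ?thesis using True
      by (simp add: bhat_def bhat_factor_def Let_def Q_eq[symmetric] g0c_eq[symmetric] selfdual_def tau_def)
  next
    case False
    then show ?thesis using dual_eq_inv[OF dg_carrier dg_carrier dual]
      by (simp add: bhat_def bhat_factor_def Let_def Q_eq[symmetric] g0c_eq[symmetric] selfdual_def)
  qed
qed (simp add: bhat_def Let_def)

lemma bhat_factor_invertible: "invertible (bhat_factor i)"
  unfolding bhat_factor_def using X_invertible tau_in_Tb[OF dg_carrier] invertible_mat_1 by auto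

lemma Bhat_transpose: "smat (delta (dg i)) (transpose (Bhat j i)) = Bhat i j"
proof (cases "b i j = 0 \<and> b j i = 0")
  case False
  then have dual: "g0c \<otimes>\<^bsub>Q\<^esub> dg i \<otimes>\<^bsub>Q\<^esub> dg j = \<one>\<^bsub>Q\<^esub>"
    using b_support dual_sym[OF dg_carrier dg_carrier] by blast
  have b: "b j i = mu (dg i) * b i j" by (rule b_swap)
  have mu: "mu (dg i) \<noteq> 0" using mu_nonzero by simp
  show ?thesis
  proof (cases "selfdual (dg i) \<or> selfdual (dg j)")
    case True
    then have j: "dg j = dg i" using dual_of_selfdual[OF dg_carrier dg_carrier dual] by blast
    then have sd: "selfdual (dg i)" using True by simp
    have "beta (tau (dg i)) * beta (tau (dg i)) = 1" using beta_tau_sq[OF dg_carrier sd] .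
    then have "delta (dg i) * (b j i * beta (tau (dg i))) = b i j"
      using sd b mu by (auto simp: delta_def field_simps)
    then show ?thesis
      using X_transpose tau_in_Tb[OF dg_carrier sd] sd j
      by (simp add: Bhat_eq_smat bhat_factor_def transpose_smat smat_smat)
  next
    case False
    then have "delta (dg i) * b j i = b i j" using b mu by (simp add: delta_def)
    then show ?thesis using False by (simp add: Bhat_eq_smat bhat_factor_def transpose_smat smat_smat)
  qed
qed (simp add: Bhat_eq_smat)

lemma support_Delta: "{i. Delta u i \<noteq> 0} \<subseteq> {i. u i \<noteq> 0}"
  by (auto simp: Delta_def)

lemma Delta_in_Vsp: "u \<in> Vsp \<Longrightarrow> Delta u \<in> Vsp"
  unfolding Vsp_iff by (rule finite_subset[OF support_Delta])

lemma formB_transpose: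
  assumes u: "u \<in> Vsp" and x: "x \<in> Vsp"
  shows "transpose (formB Bhat u x) = formB Bhat x (Delta u)"
proof -
  define S where "S = {i. u i \<noteq> 0} \<union> {i. x i \<noteq> 0}"
  have S: "finite S" using u x by (simp add: S_def Vsp_iff)
  have su: "{i. u i \<noteq> 0} \<subseteq> S" and sx: "{i. x i \<noteq> 0} \<subseteq> S" by (auto simp: S_def)
  have sD: "{i. Delta u i \<noteq> 0} \<subseteq> S" using support_Delta su by blast
  have "transpose (Bhat i j) = smat (delta (dg i)) (Bhat j i)" for i j
    using arg_cong[OF Bhat_transpose[of i j], of transpose] by (simp add: transpose_smat)
  then have "transpose (transpose (u i) ** Bhat i j ** x j) = transpose (x j) ** Bhat j i ** Delta u i" for i j
    by (simp add: matrix_transpose_mul matrix_mul_assoc Delta_def smat_mult_left smat_mult_right)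
  then have "transpose (formB Bhat u x) = (\<Sum>i\<in>S. \<Sum>j\<in>S. transpose (x j) ** Bhat j i ** Delta u i)"
    by (simp add: formB_eq_sum[OF S su sx] transpose_sum)
  also have "\<dots> = (\<Sum>j\<in>S. \<Sum>i\<in>S. transpose (x j) ** Bhat j i ** Delta u i)"
    by (rule sum.swap)
  also have "\<dots> = formB Bhat x (Delta u)"
    by (simp add: formB_eq_sum[OF S sx sD])
  finally show ?thesis .
qed

lemma sum_b_smat_eq_0:
  assumes S: "finite S" and row: "\<forall>i. (\<Sum>j\<in>S. smat (b i j) (D j)) = 0" and j: "j \<in> S"
  shows "D j = 0"
proof (rule ccontr)
  assume "D j \<noteq> 0"
  then obtain p q where nz: "D j $ p $ q \<noteq> 0" by (metis vec_eq_iff zero_index)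
  \<comment> \<open>\<open>b_swap\<close> turns the right kernel of \<open>b\<close> into a left kernel\<close>
  define c where "c k = (if k \<in> S then mu (dg k) * D k $ p $ q else 0)" for k
  have sc: "{k. c k \<noteq> 0} \<subseteq> S" by (auto simp: c_def split: if_splits)
  have "c j \<noteq> 0" using nz j mu_nonzero by (simp add: c_def)
  moreover have "finite {k. c k \<noteq> 0}" using finite_subset[OF sc S] .
  ultimately obtain i where i: "(\<Sum>k\<in>{k. c k \<noteq> 0}. c k * b k i) \<noteq> 0"
    using b_nondegenerate by blast
  have "(\<Sum>k\<in>{k. c k \<noteq> 0}. c k * b k i) = (\<Sum>k\<in>S. c k * b k i)"
    by (rule sum.mono_neutral_left[OF S sc]) auto
  also have "\<dots> = (\<Sum>k\<in>S. smat (b i k) (D k)) $ p $ q"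
    by (simp add: c_def b_swap[of i] ac_simps)
  also have "\<dots> = 0" using row by simp
  finally show False using i by simp
qed

lemma formB_basis_vec_eq:
  assumes S: "finite S" and w: "{j. w j \<noteq> 0} \<subseteq> S"
  shows "formB Bhat (basis_vec i (mat 1)) w = bhat_factor i ** (\<Sum>j\<in>S. smat (b i j) (w j))"
proof -
  have wS: "w \<in> Vsp" using finite_subset[OF w S] by (simp add: Vsp_iff)
  have w0: "j \<notin> S \<Longrightarrow> w j = 0" for j using w by blast
  have "(\<Sum>j\<in>insert i {j. w j \<noteq> 0}. Bhat i j ** w j) = (\<Sum>j\<in>insert i S. Bhat i j ** w j)"
    by (rule sum.mono_neutral_left) (use S w w0 in auto)
  also have "\<dots> = (\<Sum>j\<in>S. Bhat i j ** w j)"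
    by (rule sum.mono_neutral_right) (use S w0 in auto)
  finally show ?thesis
    by (simp add: formB_basis_vec_left[OF wS] Bhat_eq_smat matrix_mult_sum smat_mult_left smat_mult_right)
qed

lemma formB_nondegenerate:
  assumes w: "w \<in> Vsp" and w': "w' \<in> Vsp" and eq: "\<forall>x\<in>Vsp. formB Bhat x w = formB Bhat x w'"
  shows "w = w'"
proof
  fix j
  define S where "S = {j. w j \<noteq> 0} \<union> {j. w' j \<noteq> 0}"
  have S: "finite S" using w w' by (simp add: S_def Vsp_iff)
  have sw: "{j. w j \<noteq> 0} \<subseteq> S" and sw': "{j. w' j \<noteq> 0} \<subseteq> S" by (auto simp: S_def)
  have "(\<Sum>j\<in>S. smat (b i j) (w j - w' j)) = 0" for i
  proof -
    have "formB Bhat (basis_vec i (mat 1)) w = formB Bhat (basis_vec i (mat 1)) w'"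
      by (rule eq[rule_format, OF basis_vec_in_Vsp])
    then have "bhat_factor i ** (\<Sum>j\<in>S. smat (b i j) (w j)) = bhat_factor i ** (\<Sum>j\<in>S. smat (b i j) (w' j))"
      by (simp only: formB_basis_vec_eq[OF S sw] formB_basis_vec_eq[OF S sw'])
    then show ?thesis
      using invertible_cancel_left[OF bhat_factor_invertible] by (simp add: smat_diff sum_subtractf)
  qed
  then show "w j = w' j"
    using sum_b_smat_eq_0[OF S, of "\<lambda>j. w j - w' j" j] by (cases "j \<in> S") (auto simp: S_def)
qed

subsection \<open>The adjoint of rank-one operators\<close>

definition Rsum :: "nat \<Rightarrow> (nat \<Rightarrow> 'f) \<Rightarrow> (nat \<Rightarrow> 'i \<Rightarrow> 'f^'n^'n) \<Rightarrow> (nat \<Rightarrow> 'i \<Rightarrow> 'f^'n^'n)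
    \<Rightarrow> ('i \<Rightarrow> 'f^'n^'n) \<Rightarrow> 'i \<Rightarrow> 'f^'n^'n" where
  "Rsum n c v u = (\<lambda>x p. \<Sum>k<n. smat (c k) (rop Bhat (v k) (u k) x p))"

abbreviation homogeneous_pairs :: "nat \<Rightarrow> (nat \<Rightarrow> 'g set) \<Rightarrow> (nat \<Rightarrow> 'g set)
    \<Rightarrow> (nat \<Rightarrow> 'i \<Rightarrow> 'f^'n^'n) \<Rightarrow> (nat \<Rightarrow> 'i \<Rightarrow> 'f^'n^'n) \<Rightarrow> bool" where
  "homogeneous_pairs n au av u v \<equiv> \<forall>k<n. au k \<in> carrier Gb \<and> av k \<in> carrier Gb \<and>
     u k \<in> Vhom Gb Tb X gam dg (au k) \<and> v k \<in> Vhom Gb Tb X gam dg (av k)"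

lemma Ralg_iff: "r \<in> Ralg Gb Tb X gam dg g0 b \<longleftrightarrow>
    (\<exists>n c u v au av. homogeneous_pairs n au av u v \<and> r = Rsum n c v u)"
  by (simp add: Ralg_def Rsum_def)

lemma Rdeg_iff: "r \<in> Rdeg Gb Tb X gam dg g0 b a \<longleftrightarrow>
    (\<exists>n c u v au av. homogeneous_pairs n au av u v \<and>
       (\<forall>k<n. g0 \<otimes>\<^bsub>Gb\<^esub> au k \<otimes>\<^bsub>Gb\<^esub> av k = a) \<and> r = Rsum n c v u)"
  unfolding Rdeg_def Rsum_def by blast

lemma Rsum_apply: "Rsum n c v u x = (\<lambda>p. \<Sum>k<n. smat (c k) (v k p ** formB Bhat (u k) x))"
  by (simp add: Rsum_def rop_def)

lemma Rsum_in_Vsp: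
  assumes "\<forall>k<n. v k \<in> Vsp"
  shows "Rsum n c v u x \<in> Vsp"
proof -
  have "{p. Rsum n c v u x p \<noteq> 0} \<subseteq> (\<Union>k<n. {p. v k p \<noteq> 0})"
    unfolding Rsum_apply using support_sum_smat_mult_subset .
  then show ?thesis using assms finite_subset unfolding Vsp_iff by blast
qed

lemma Rsum_outside_Vsp: "x \<notin> Vsp \<Longrightarrow> Rsum n c v u x = (\<lambda>p. 0)"
  by (simp add: Rsum_apply formB_infinite_right Vsp_iff)

lemma formB_Rsum_adjoint:
  assumes uv: "\<forall>k<n. u k \<in> Vsp \<and> v k \<in> Vsp" and x: "x \<in> Vsp" and y: "y \<in> Vsp"
  shows "formB Bhat (Rsum n c v u x) y = formB Bhat x (Rsum n c (\<lambda>k. Delta (u k)) v y)"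
proof -
  have "formB Bhat (Rsum n c v u x) y
      = (\<Sum>k<n. smat (c k) (transpose (formB Bhat (u k) x) ** formB Bhat (v k) y))"
    unfolding Rsum_apply using uv y by (simp add: formB_sum_left)
  also have "\<dots> = (\<Sum>k<n. smat (c k) (formB Bhat x (Delta (u k)) ** formB Bhat (v k) y))"
    using uv x by (simp add: formB_transpose)
  also have "\<dots> = formB Bhat x (Rsum n c (\<lambda>k. Delta (u k)) v y)"
    unfolding Rsum_apply using uv x Delta_in_Vsp by (simp add: formB_sum_right)
  finally show ?thesis .
qed

lemma Vhom_in_Vsp: "u \<in> Vhom Gb Tb X gam dg a \<Longrightarrow> u \<in> Vsp"
  by (simp add: Vhom_def)

lemma Delta_in_Vhom:
  assumes u: "u \<in> Vhom Gb Tb X gam dg a"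
  shows "Delta u \<in> Vhom Gb Tb X gam dg a"
proof -
  have "Delta u i = 0 \<or> (\<exists>t\<in>Tb. \<exists>c. gam (dg i) \<otimes>\<^bsub>Gb\<^esub> t = a \<and> Delta u i = smat c (X t))" for i
  proof -
    have "u i = 0 \<or> (\<exists>t\<in>Tb. \<exists>c. gam (dg i) \<otimes>\<^bsub>Gb\<^esub> t = a \<and> u i = smat c (X t))"
      using u by (simp add: Vhom_def)
    then show ?thesis
    proof
      assume "\<exists>t\<in>Tb. \<exists>c. gam (dg i) \<otimes>\<^bsub>Gb\<^esub> t = a \<and> u i = smat c (X t)"
      then obtain t c where "t \<in> Tb" "gam (dg i) \<otimes>\<^bsub>Gb\<^esub> t = a" "u i = smat c (X t)" by blast
      then show ?thesis by (intro disjI2 bexI[of _ t] exI[of _ "delta (dg i) * c"])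
          (simp_all add: Delta_def smat_smat)
    qed (simp add: Delta_def)
  qed
  moreover have "Delta u \<in> Vsp" using u Delta_in_Vsp by (simp add: Vhom_def)
  ultimately show ?thesis by (simp add: Vhom_def)
qed

lemma phiR_Rsum:
  assumes hom: "homogeneous_pairs n au av u v"
  shows "phiR Gb Tb X gam dg g0 b (Rsum n c v u) = Rsum n c (\<lambda>k. Delta (u k)) v"
  unfolding phiR_def
proof (rule the_equality)
  have uv: "\<forall>k<n. u k \<in> Vsp \<and> v k \<in> Vsp" using hom Vhom_in_Vsp by blast
  have "homogeneous_pairs n av au v (\<lambda>k. Delta (u k))" using hom Delta_in_Vhom by blast
  then have "Rsum n c (\<lambda>k. Delta (u k)) v \<in> Ralg Gb Tb X gam dg g0 b"
    unfolding Ralg_iff by (intro exI[of _ n] exI[of _ c] exI[of _ v] exI[of _ "\<lambda>k. Delta (u k)"] exI[of _ av]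
      exI[of _ au]) simp
  then show "Rsum n c (\<lambda>k. Delta (u k)) v \<in> Ralg Gb Tb X gam dg g0 b \<and>
      (\<forall>x\<in>Vsp. \<forall>y\<in>Vsp. formB Bhat (Rsum n c v u x) y = formB Bhat x (Rsum n c (\<lambda>k. Delta (u k)) v y))"
    using formB_Rsum_adjoint[OF uv] by blast
next
  fix s assume s: "s \<in> Ralg Gb Tb X gam dg g0 b \<and>
      (\<forall>x\<in>Vsp. \<forall>y\<in>Vsp. formB Bhat (Rsum n c v u x) y = formB Bhat x (s y))"
  then obtain m c' u' v' au' av' where hom': "homogeneous_pairs m au' av' u' v'"
    and s_eq: "s = Rsum m c' v' u'" unfolding Ralg_iff by blast
  have uv: "\<forall>k<n. u k \<in> Vsp \<and> v k \<in> Vsp" using hom Vhom_in_Vsp by blast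
  show "s = Rsum n c (\<lambda>k. Delta (u k)) v"
  proof
    fix y show "s y = Rsum n c (\<lambda>k. Delta (u k)) v y"
    proof (cases "y \<in> Vsp")
      case True
      show ?thesis
      proof (rule formB_nondegenerate)
        have "\<forall>k<m. v' k \<in> Vsp" using hom' Vhom_in_Vsp by blast
        then show "s y \<in> Vsp" unfolding s_eq by (rule Rsum_in_Vsp)
        show "Rsum n c (\<lambda>k. Delta (u k)) v y \<in> Vsp" using uv Delta_in_Vsp by (simp add: Rsum_in_Vsp)
        show "\<forall>x\<in>Vsp. formB Bhat x (s y) = formB Bhat x (Rsum n c (\<lambda>k. Delta (u k)) v y)"
          using s formB_Rsum_adjoint[OF uv] True by simp
      qed
    qed (simp add: s_eq Rsum_outside_Vsp)
  qed
qed

lemma phiR_phiR_Rsum: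
  assumes hom: "homogeneous_pairs n au av u v"
  shows "phiR Gb Tb X gam dg g0 b (phiR Gb Tb X gam dg g0 b (Rsum n c v u))
       = Rsum n c (\<lambda>k. Delta (v k)) (\<lambda>k. Delta (u k))"
proof -
  have "homogeneous_pairs n av au v (\<lambda>k. Delta (u k))" using hom Delta_in_Vhom by blast
  then show ?thesis unfolding phiR_Rsum[OF hom] by (rule phiR_Rsum)
qed

lemma Vhom_degree: "u \<in> Vhom Gb Tb X gam dg a \<Longrightarrow> u i \<noteq> 0 \<Longrightarrow> a \<in> dg i"
  using Q_mult_Tb_closed[OF dg_carrier gam_dg] by (auto simp: Vhom_def)

lemma Delta_Vhom:
  assumes u: "u \<in> Vhom Gb Tb X gam dg a" and a: "a \<in> dg i"
  shows "Delta u = (\<lambda>k. smat (delta (dg i)) (u k))"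
proof
  fix k show "Delta u k = smat (delta (dg i)) (u k)"
  proof (cases "u k = 0")
    case False
    have "dg k = dg i" using dg_eq_of_mem[OF Vhom_degree[OF u False] a] .
    then show ?thesis by (simp add: Delta_def)
  qed (simp add: Delta_def)
qed

lemma rop_Delta_Delta:
  assumes u: "u \<in> Vhom Gb Tb X gam dg a" and v: "v \<in> Vhom Gb Tb X gam dg a'"
    and a: "a \<in> dg i" and a': "a' \<in> dg j"
  shows "rop Bhat (Delta v) (Delta u) = opscale (delta (dg i) * delta (dg j)) (rop Bhat v u)"
  unfolding Delta_Vhom[OF u a] Delta_Vhom[OF v a'] rop_def opscale_def
    formB_smat_left[OF delta_nonzero[OF dg_carrier]]
  by (simp add: smat_mult_left smat_mult_right smat_smat mult.commute)

subsection \<open>The condition on \<open>\<phi>\<^sup>2\<close>\<close>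

definition phi_sq_law :: bool where
  "phi_sq_law \<longleftrightarrow> (\<forall>a\<in>carrier Gb. \<forall>r\<in>Rdeg Gb Tb X gam dg g0 b a. \<forall>g\<in>a.
     phiR Gb Tb X gam dg g0 b (phiR Gb Tb X gam dg g0 b r) = opscale ((chi g)^2) r)"

lemma delta_law_imp_phi_sq_law:
  assumes law: delta_law
  shows phi_sq_law
  unfolding phi_sq_law_def
proof (intro ballI)
  fix a r g assume a: "a \<in> carrier Gb" and r: "r \<in> Rdeg Gb Tb X gam dg g0 b a" and g: "g \<in> a"
  obtain n c u v au av where hom: "homogeneous_pairs n au av u v"
    and deg: "\<forall>k<n. g0 \<otimes>\<^bsub>Gb\<^esub> au k \<otimes>\<^bsub>Gb\<^esub> av k = a" and r_eq: "r = Rsum n c v u"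
    using r unfolding Rdeg_iff by blast
  have scaled: "rop Bhat (Delta (v k)) (Delta (u k)) = opscale ((chi g)^2) (rop Bhat (v k) (u k))"
    if k: "k < n" for k
  proof (cases "\<exists>i j. u k i \<noteq> 0 \<and> v k j \<noteq> 0")
    case True
    then obtain i j where "u k i \<noteq> 0" "v k j \<noteq> 0" by blast
    then have deg_ij: "au k \<in> dg i" "av k \<in> dg j" using hom k Vhom_degree by blast+
    have "rop Bhat (Delta (v k)) (Delta (u k)) = opscale (delta (dg i) * delta (dg j)) (rop Bhat (v k) (u k))"
      by (rule rop_Delta_Delta) (use hom k deg_ij in auto)
    moreover have "delta (dg i) * delta (dg j) = (chi g)^2"
      using law deg k g deg_ij unfolding delta_law_def by blast
    ultimately show ?thesis by simp
  next
    case False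
    then have "u k = (\<lambda>i. 0) \<or> v k = (\<lambda>i. 0)" by auto
    then show ?thesis by (auto simp: Delta_def rop_def opscale_def formB_0_left)
  qed
  show "phiR Gb Tb X gam dg g0 b (phiR Gb Tb X gam dg g0 b r) = opscale ((chi g)^2) r"
    unfolding r_eq phiR_phiR_Rsum[OF hom]
    by (auto simp: Rsum_def opscale_def smat_sum smat_smat mult.commute scaled
        intro!: sum.cong)
qed

lemma basis_vec_in_Vhom: "t \<in> Tb \<Longrightarrow> basis_vec i (X t) \<in> Vhom Gb Tb X gam dg (gam (dg i) \<otimes>\<^bsub>Gb\<^esub> t)"
  unfolding Vhom_def using basis_vec_in_Vsp by (auto simp: basis_vec_def intro!: exI[of _ 1])

lemma rop_basis_vec_nonzero:
  assumes t: "t \<in> Tb" "t' \<in> Tb" and b: "b i i' \<noteq> 0"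
  shows "rop Bhat (basis_vec j (X t')) (basis_vec i (X t)) (basis_vec i' (mat 1)) j \<noteq> 0"
proof -
  have "X t \<noteq> 0" using X_invertible t invertible_neq_0 by blast
  then have "formB Bhat (basis_vec i (X t)) (basis_vec i' (mat 1)) = transpose (X t) ** Bhat i i'"
    unfolding formB_def support_basis_vec[OF \<open>X t \<noteq> 0\<close>] support_basis_vec[OF mat_1_neq_0]
    by (simp add: basis_vec_def)
  then have "rop Bhat (basis_vec j (X t')) (basis_vec i (X t)) (basis_vec i' (mat 1)) j
      = X t' ** (smat (beta t) (X t) ** smat (b i i') (bhat_factor i))"
    using X_transpose t by (simp add: rop_def basis_vec_def Bhat_eq_smat)
  moreover have "beta t \<noteq> 0" using beta_sign t by fastforce
  then have "invertible (X t' ** (smat (beta t) (X t) ** smat (b i i') (bhat_factor i)))"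
    using X_invertible t b bhat_factor_invertible by (intro invertible_mult invertible_smat) auto
  ultimately show ?thesis using invertible_neq_0 by simp
qed

lemma phi_sq_law_imp_delta_law:
  assumes law: phi_sq_law
  shows delta_law
  unfolding delta_law_def
proof (intro allI ballI)
  fix i j a a' g assume a: "a \<in> dg i" and a': "a' \<in> dg j" and g: "g \<in> g0 \<otimes>\<^bsub>Gb\<^esub> a \<otimes>\<^bsub>Gb\<^esub> a'"
  obtain t where t: "t \<in> Tb" "a = gam (dg i) \<otimes>\<^bsub>Gb\<^esub> t"
    using Q_mem_diff[OF dg_carrier gam_dg a] by blast
  obtain t' where t': "t' \<in> Tb" "a' = gam (dg j) \<otimes>\<^bsub>Gb\<^esub> t'"
    using Q_mem_diff[OF dg_carrier gam_dg a'] by blast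
  define u where "u = basis_vec i (X t)"
  define v where "v = basis_vec j (X t')"
  have uv: "u \<in> Vhom Gb Tb X gam dg a" "v \<in> Vhom Gb Tb X gam dg a'"
    using basis_vec_in_Vhom t t' by (simp_all add: u_def v_def)
  have hom: "homogeneous_pairs 1 (\<lambda>_. a) (\<lambda>_. a') (\<lambda>_. u) (\<lambda>_. v)"
    using uv a a' dg_mem_carrier by simp
  have r_eq: "Rsum 1 (\<lambda>_. 1) (\<lambda>_. v) (\<lambda>_. u) = rop Bhat v u" by (simp add: Rsum_def)
  have "Rsum 1 (\<lambda>_. 1) (\<lambda>_. v) (\<lambda>_. u) \<in> Rdeg Gb Tb X gam dg g0 b (g0 \<otimes>\<^bsub>Gb\<^esub> a \<otimes>\<^bsub>Gb\<^esub> a')"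
    unfolding Rdeg_iff
    by (intro exI[of _ 1] exI[of _ "\<lambda>_. 1"] exI[of _ "\<lambda>_. u"] exI[of _ "\<lambda>_. v"]
        exI[of _ "\<lambda>_. a"] exI[of _ "\<lambda>_. a'"]) (use hom in simp)
  moreover have "g0 \<otimes>\<^bsub>Gb\<^esub> a \<otimes>\<^bsub>Gb\<^esub> a' \<in> carrier Gb" using g0_in a a' dg_mem_carrier by simp
  ultimately have "phiR Gb Tb X gam dg g0 b (phiR Gb Tb X gam dg g0 b (rop Bhat v u))
      = opscale ((chi g)^2) (rop Bhat v u)"
    using law g unfolding phi_sq_law_def r_eq by blast
  moreover have "phiR Gb Tb X gam dg g0 b (phiR Gb Tb X gam dg g0 b (rop Bhat v u))
      = opscale (delta (dg i) * delta (dg j)) (rop Bhat v u)"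
    using phiR_phiR_Rsum[OF hom, of "\<lambda>_. 1"] rop_Delta_Delta[OF uv a a'] by (simp add: Rsum_def)
  ultimately have "opscale ((chi g)^2) (rop Bhat v u) = opscale (delta (dg i) * delta (dg j)) (rop Bhat v u)"
    by simp
  then have "opscale ((chi g)^2) (rop Bhat v u) x j = opscale (delta (dg i) * delta (dg j)) (rop Bhat v u) x j"
    for x by simp
  then have "smat ((chi g)^2) (rop Bhat v u x j) = smat (delta (dg i) * delta (dg j)) (rop Bhat v u x j)"
    for x unfolding opscale_def .
  moreover obtain i' where i': "b i i' \<noteq> 0" using b_row_nonzero by blast
  ultimately have "(chi g)^2 = delta (dg i) * delta (dg j)"
    using smat_cancel rop_basis_vec_nonzero[OF t(1) t'(1) i'] unfolding u_def v_def by blast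
  then show "delta (dg i) * delta (dg j) = (chi g)^2" by simp
qed

theorem phi_sq_law_iff:
  "phi_sq_law \<longleftrightarrow>
    G\<lparr>carrier := \<Union>Tb\<rparr> \<cong> Gb\<lparr>carrier := Tb\<rparr> \<times>\<times> G\<lparr>carrier := H\<rparr> \<and>
    (\<exists>mu0. mu0 \<noteq> 0 \<and> (\<forall>A\<in>range dg. \<forall>a\<in>A. \<forall>g\<in>a.
       mu A = (if g0c \<otimes>\<^bsub>Q\<^esub> A \<otimes>\<^bsub>Q\<^esub> A = \<one>\<^bsub>Q\<^esub>
               then mu0 / (chi g)^2 * beta (g0 \<otimes>\<^bsub>Gb\<^esub> gam A \<otimes>\<^bsub>Gb\<^esub> gam A)
               else mu0 / (chi g)^2)))"
proof -
  have "phi_sq_law \<longleftrightarrow> delta_law"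
    using delta_law_imp_phi_sq_law phi_sq_law_imp_delta_law by blast
  then show ?thesis
    by (simp only: delta_law_iff delta_uniform_iff split_iff_chi_sq_trivial[OF Tb_subgroup Tb_exp2])
qed

end

theorem proposition5p1:
  fixes G :: "('g, 'z) monoid_scheme"
    and h :: 'g
    and chi :: "'g \<Rightarrow> 'f::field"
    and Tb :: "'g set set"
    and X :: "'g set \<Rightarrow> 'f^'n^'n"
    and beta :: "'g set \<Rightarrow> 'f"
    and g0 :: "'g set"
    and dg :: "'i \<Rightarrow> 'g set set"
    and b :: "'i \<Rightarrow> 'i \<Rightarrow> 'f"
    and mu :: "'g set set \<Rightarrow> 'f"
    and gam :: "'g set set \<Rightarrow> 'g set"
  defines "H \<equiv> {\<one>\<^bsub>G\<^esub>, h}"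
  defines "Gb \<equiv> G Mod H"
  defines "Q \<equiv> Gb Mod Tb"
  defines "g0c \<equiv> Tb #>\<^bsub>Gb\<^esub> g0"
  assumes F_closed: "alg_closed TYPE('f)"
    and F_char: "(2::'f) \<noteq> 0"
    and G_ab: "comm_group G"
    and h_in: "h \<in> carrier G" and h_ord: "h \<noteq> \<one>\<^bsub>G\<^esub>" "h \<otimes>\<^bsub>G\<^esub> h = \<one>\<^bsub>G\<^esub>"
    and chi_nz: "\<forall>a\<in>carrier G. chi a \<noteq> 0"
    and chi_mult: "\<forall>a\<in>carrier G. \<forall>c\<in>carrier G. chi (a \<otimes>\<^bsub>G\<^esub> c) = chi a * chi c"
    and chi_h: "chi h = -1"
    (* the graded division algebra D = M_l(F), l = CARD('n), support Tb *)
    and Tb_sub: "subgroup Tb Gb"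
    and Tb_el2: "\<forall>t\<in>Tb. t \<otimes>\<^bsub>Gb\<^esub> t = \<one>\<^bsub>Gb\<^esub>"
    and X_indep: "\<forall>c. (\<Sum>t\<in>Tb. smat (c t) (X t)) = 0 \<longrightarrow> (\<forall>t\<in>Tb. c t = 0)"
    and X_span: "\<forall>M::'f^'n^'n. \<exists>c. M = (\<Sum>t\<in>Tb. smat (c t) (X t))"
    and X_graded: "\<forall>s\<in>Tb. \<forall>t\<in>Tb. \<exists>c. X s ** X t = smat c (X (s \<otimes>\<^bsub>Gb\<^esub> t))"
    and X_inv: "\<forall>t\<in>Tb. invertible (X t)"
    and X_transp: "\<forall>t\<in>Tb. transpose (X t) = smat (beta t) (X t)"
    and beta_pm: "\<forall>t\<in>Tb. beta t = 1 \<or> beta t = -1"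
    (* g0, the graded space V~ (homogeneous basis e_i of degree dg i) and the form B~ *)
    and g0_in: "g0 \<in> carrier Gb"
    and dg_in: "\<forall>i. dg i \<in> carrier Q"
    and b_supp: "\<forall>i j. b i j \<noteq> 0 \<longrightarrow> g0c \<otimes>\<^bsub>Q\<^esub> dg i \<otimes>\<^bsub>Q\<^esub> dg j = \<one>\<^bsub>Q\<^esub>"
    and b_nondeg: "\<forall>c::'i \<Rightarrow> 'f. finite {i. c i \<noteq> 0} \<and> (\<exists>i. c i \<noteq> 0) \<longrightarrow>
                      (\<exists>j. (\<Sum>i\<in>{i. c i \<noteq> 0}. c i * b i j) \<noteq> 0)"
    and mu_nz: "\<forall>A\<in>carrier Q. mu A \<noteq> 0"
    and b_mu: "\<forall>i j. dg j = inv\<^bsub>Q\<^esub> (g0c \<otimes>\<^bsub>Q\<^esub> dg i) \<longrightarrow> b j i = mu (dg i) * b i j"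
    and gam_in: "\<forall>A\<in>carrier Q. gam A \<in> A"
    and gam_rel: "\<forall>A\<in>carrier Q. g0c \<otimes>\<^bsub>Q\<^esub> A \<otimes>\<^bsub>Q\<^esub> A \<noteq> \<one>\<^bsub>Q\<^esub> \<longrightarrow>
                    g0 \<otimes>\<^bsub>Gb\<^esub> gam A \<otimes>\<^bsub>Gb\<^esub> gam (inv\<^bsub>Q\<^esub> (g0c \<otimes>\<^bsub>Q\<^esub> A)) = \<one>\<^bsub>Gb\<^esub>"
  shows "(\<forall>a\<in>carrier Gb. \<forall>r\<in>Rdeg Gb Tb X gam dg g0 b a. \<forall>g\<in>a.
             phiR Gb Tb X gam dg g0 b (phiR Gb Tb X gam dg g0 b r) = opscale ((chi g)^2) r)
         \<longleftrightarrow>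
         ((G\<lparr>carrier := \<Union>Tb\<rparr>) \<cong> ((Gb\<lparr>carrier := Tb\<rparr>) \<times>\<times> (G\<lparr>carrier := H\<rparr>)) \<and>
          (\<exists>mu0::'f. mu0 \<noteq> 0 \<and>
            (\<forall>A\<in>dg ` UNIV. \<forall>a\<in>A. \<forall>g\<in>a.
               mu A = (if g0c \<otimes>\<^bsub>Q\<^esub> A \<otimes>\<^bsub>Q\<^esub> A = \<one>\<^bsub>Q\<^esub>
                       then mu0 / (chi g)^2 * beta (g0 \<otimes>\<^bsub>Gb\<^esub> gam A \<otimes>\<^bsub>Gb\<^esub> gam A)
                       else mu0 / (chi g)^2))))"
proof -
  interpret graded_form G h chi H Gb Tb X beta g0 dg b mu gam Q g0c
    by (intro graded_form.intro involution_quotient.intro involution_quotient_axioms.intro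
        graded_form_axioms.intro) (fact | simp add: H_def Gb_def Q_def g0c_def)+
  show ?thesis using phi_sq_law_iff unfolding phi_sq_law_def .
qed

end
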